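(* Let $F$ be a formally real field, $(D,\bar{\ })$ an $F$-division algebra with involution, $n\in\mathbb{N}$, and $(A,\sigma)=(M_n(D),\bar{\ }^t)$. Let $a\in\operatorname{Sym}(D,\bar{\ })^\times$ and let $h_1,h_2\in\mathscr F_a$ be such that $[h_1\boxtimes h_2]\in I(A,\sigma)$. Then $[h_1]\in I(A,\sigma)$ or $[h_2]\in I(A,\sigma)$.
   Context: $(D,\bar{\ })$ is a division algebra with involution such that $(M_n(D),\bar{\ }^t)$ (conjugate transpose) is an $F$-algebra with involution (finite-dimensional, centre of degree $\le2$ over $F$, $F$-linear involution). $W(A,\sigma)$ is the Witt group of non-singular hermitian forms over $(A,\sigma)$ on finitely generated right $A$-modules; $[h]$ denotes the Witt class of a form $h$. Every finitely generated right $A$-module is isomorphic to $(D^n)^k$ for a unique $k$, the rank of a form on it; the parity of the rank is a Witt class invariant, and $I(A,\sigma)$ is the subgroup of classes of forms of even rank. $\operatorname{Sym}(D,\bar{\ })^\times$ is the set of invertible $a\in D$ with $\bar a=a$. For such $a$, $h_a:D^n\times D^n\to M_n(D)$, $h_a(x,y)=\bar x^tay$ ($x,y$ viewed as $1\times n$ row vectors), a hermitian form of rank one over $(A,\sigma)$. $\mathscr F_a=\{h_{a^{i_1}}\perp\cdots\perp h_{a^{i_\ell}}\mid \ell\in\mathbb{N},\ i_1,\ldots,i_\ell\in\mathbb{N}_0\}$ ($\perp$ orthogonal sum), and for $h_1=h_{a^{i_1}}\perp\cdots\perp h_{a^{i_k}}$, $h_2=h_{a^{j_1}}\perp\cdots\perp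 h_{a^{j_\ell}}$ in $\mathscr F_a$, $h_1\boxtimes h_2=\perp_{p=1}^k\perp_{q=1}^\ell h_{a^{i_p+j_q}}$. *)

theory Defs
  imports "Jordan_Normal_Form.Matrix"
begin

definition centre :: "'d::division_ring set" where
  "centre = {z. \<forall>x. z * x = x * z}"

(* F is given as (the image of) a subfield of D contained in the centre of D *)
definition central_subfield :: "'d::division_ring set \<Rightarrow> bool" where
  "central_subfield Fs \<longleftrightarrow> Fs \<subseteq> centre \<and> 0 \<in> Fs \<and> 1 \<in> Fs \<and>
     (\<forall>x\<in>Fs. \<forall>y\<in>Fs. x + y \<in> Fs \<and> x * y \<in> Fs) \<and>
     (\<forall>x\<in>Fs. - x \<in> Fs) \<and> (\<forall>x\<in>Fs. x \<noteq> 0 \<longrightarrow> inverse x \<in> Fs)"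

definition formally_real :: "'d::division_ring set \<Rightarrow> bool" where
  "formally_real Fs \<longleftrightarrow> \<not> (\<exists>xs. set xs \<subseteq> Fs \<and> - 1 = sum_list (map (\<lambda>x. x * x) xs))"

definition spanned_over :: "'d::division_ring set \<Rightarrow> 'd list \<Rightarrow> 'd set \<Rightarrow> bool" where
  "spanned_over Fs bs S \<longleftrightarrow>
     (\<forall>x\<in>S. \<exists>cs. length cs = length bs \<and> set cs \<subseteq> Fs \<and>
                 x = sum_list (map (\<lambda>(c,b). c * b) (zip cs bs)))"

definition fin_dim_over :: "'d::division_ring set \<Rightarrow> bool" where
  "fin_dim_over Fs \<longleftrightarrow> (\<exists>bs. spanned_over Fs bs UNIV)"

definition centre_deg_le2 :: "'d::division_ring set \<Rightarrow> bool" where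
  "centre_deg_le2 Fs \<longleftrightarrow> (\<exists>bs. length bs \<le> 2 \<and> set bs \<subseteq> centre \<and> spanned_over Fs bs centre)"

definition F_involution :: "'d::division_ring set \<Rightarrow> ('d \<Rightarrow> 'd) \<Rightarrow> bool" where
  "F_involution Fs bar \<longleftrightarrow>
     (\<forall>x y. bar (x + y) = bar x + bar y) \<and> (\<forall>x y. bar (x * y) = bar y * bar x) \<and>
     (\<forall>x. bar (bar x) = x) \<and> (\<forall>c\<in>Fs. bar c = c)"

definition sigma :: "('d \<Rightarrow> 'd) \<Rightarrow> 'd::division_ring mat \<Rightarrow> 'd mat" where
  "sigma bar M = transpose_mat (map_mat bar M)"

(* The module (D^n)^k is represented by k x n matrices (row r = r-th copy of D^n);
   the right A-action is matrix multiplication on the right. A form of rank k is a pair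
   (k, h) with h : (D^n)^k x (D^n)^k -> M_n(D). *)
type_synonym 'd form = "nat \<times> ('d mat \<Rightarrow> 'd mat \<Rightarrow> 'd mat)"

definition submodule :: "nat \<Rightarrow> nat \<Rightarrow> 'd::division_ring mat set \<Rightarrow> bool" where
  "submodule n k L \<longleftrightarrow> L \<subseteq> carrier_mat k n \<and> 0\<^sub>m k n \<in> L \<and>
     (\<forall>x\<in>L. \<forall>y\<in>L. x + y \<in> L) \<and> (\<forall>x\<in>L. \<forall>a\<in>carrier_mat n n. x * a \<in> L)"

definition A_linear :: "nat \<Rightarrow> nat \<Rightarrow> ('d::division_ring mat \<Rightarrow> 'd mat) \<Rightarrow> bool" where
  "A_linear n k f \<longleftrightarrow> (\<forall>x\<in>carrier_mat k n. f x \<in> carrier_mat n n) \<and>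
     (\<forall>x\<in>carrier_mat k n. \<forall>y\<in>carrier_mat k n. f (x + y) = f x + f y) \<and>
     (\<forall>x\<in>carrier_mat k n. \<forall>a\<in>carrier_mat n n. f (x * a) = f x * a)"

definition herm_form :: "('d::division_ring \<Rightarrow> 'd) \<Rightarrow> nat \<Rightarrow> 'd form \<Rightarrow> bool" where
  "herm_form bar n f \<longleftrightarrow> (case f of (k, h) \<Rightarrow>
     (\<forall>x\<in>carrier_mat k n. \<forall>y\<in>carrier_mat k n. h x y \<in> carrier_mat n n) \<and>
     (\<forall>x\<in>carrier_mat k n. \<forall>y\<in>carrier_mat k n. \<forall>z\<in>carrier_mat k n.
         h (x + y) z = h x z + h y z \<and> h z (x + y) = h z x + h z y) \<and>
     (\<forall>x\<in>carrier_mat k n. \<forall>y\<in>carrier_mat k n. \<forall>a\<in>carrier_mat n n. \<forall>b\<in>carrier_mat n n.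
         h (x * a) (y * b) = sigma bar a * h x y * b) \<and>
     (\<forall>x\<in>carrier_mat k n. \<forall>y\<in>carrier_mat k n. h y x = sigma bar (h x y)) \<and>
     (\<forall>g. A_linear n k g \<longrightarrow>
         (\<exists>!y. y \<in> carrier_mat k n \<and> (\<forall>x\<in>carrier_mat k n. g x = h y x))))"

definition rank :: "'d form \<Rightarrow> nat" where
  "rank f = fst f"

definition metabolic :: "('d::division_ring \<Rightarrow> 'd) \<Rightarrow> nat \<Rightarrow> 'd form \<Rightarrow> bool" where
  "metabolic bar n f \<longleftrightarrow> herm_form bar n f \<and> (case f of (k, h) \<Rightarrow>
     (\<exists>L. submodule n k L \<and> L = {y \<in> carrier_mat k n. \<forall>x\<in>L. h x y = 0\<^sub>m n n}))"

definition isometric :: "nat \<Rightarrow> 'd::division_ring form \<Rightarrow> 'd form \<Rightarrow> bool" where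
  "isometric n f g \<longleftrightarrow> (case f of (k1, h1) \<Rightarrow> case g of (k2, h2) \<Rightarrow>
     (\<exists>\<phi>. bij_betw \<phi> (carrier_mat k1 n) (carrier_mat k2 n) \<and>
        (\<forall>x\<in>carrier_mat k1 n. \<forall>y\<in>carrier_mat k1 n. \<phi> (x + y) = \<phi> x + \<phi> y) \<and>
        (\<forall>x\<in>carrier_mat k1 n. \<forall>a\<in>carrier_mat n n. \<phi> (x * a) = \<phi> x * a) \<and>
        (\<forall>x\<in>carrier_mat k1 n. \<forall>y\<in>carrier_mat k1 n. h2 (\<phi> x) (\<phi> y) = h1 x y)))"

definition top_rows :: "nat \<Rightarrow> nat \<Rightarrow> 'd mat \<Rightarrow> 'd mat" where
  "top_rows k1 n x = mat k1 n (\<lambda>(i,j). x $$ (i, j))"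

definition bottom_rows :: "nat \<Rightarrow> nat \<Rightarrow> nat \<Rightarrow> 'd mat \<Rightarrow> 'd mat" where
  "bottom_rows k1 k2 n x = mat k2 n (\<lambda>(i,j). x $$ (i + k1, j))"

definition osum :: "nat \<Rightarrow> 'd::division_ring form \<Rightarrow> 'd form \<Rightarrow> 'd form" where
  "osum n f g = (case f of (k1, h1) \<Rightarrow> case g of (k2, h2) \<Rightarrow>
     (k1 + k2, \<lambda>x y. h1 (top_rows k1 n x) (top_rows k1 n y)
                    + h2 (bottom_rows k1 k2 n x) (bottom_rows k1 k2 n y)))"

definition witt_equiv :: "('d::division_ring \<Rightarrow> 'd) \<Rightarrow> nat \<Rightarrow> 'd form \<Rightarrow> 'd form \<Rightarrow> bool" where
  "witt_equiv bar n f g \<longleftrightarrow> (\<exists>m1 m2. metabolic bar n m1 \<and> metabolic bar n m2 \<and>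
      isometric n (osum n f m1) (osum n g m2))"

(* [f] \<in> I(A,sigma): the Witt class of f is the class of a form of even rank *)
definition in_I :: "('d::division_ring \<Rightarrow> 'd) \<Rightarrow> nat \<Rightarrow> 'd form \<Rightarrow> bool" where
  "in_I bar n f \<longleftrightarrow> (\<exists>g. herm_form bar n g \<and> even (rank g) \<and> witt_equiv bar n f g)"

(* h_a(x,y) = xbar^t a y for row vectors x,y in D^n (1 x n matrices) *)
definition h_form :: "('d::division_ring \<Rightarrow> 'd) \<Rightarrow> nat \<Rightarrow> 'd \<Rightarrow> 'd form" where
  "h_form bar n a = (1, \<lambda>x y. mat n n (\<lambda>(i,j). bar (x $$ (0, i)) * a * y $$ (0, j)))"

fun form_of_exps :: "('d::division_ring \<Rightarrow> 'd) \<Rightarrow> nat \<Rightarrow> 'd \<Rightarrow> nat list \<Rightarrow> 'd form" where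
  "form_of_exps bar n a [] = (0, \<lambda>x y. 0\<^sub>m n n)"
| "form_of_exps bar n a [i] = h_form bar n (a ^ i)"
| "form_of_exps bar n a (i # is) = osum n (h_form bar n (a ^ i)) (form_of_exps bar n a is)"

definition family_F :: "('d::division_ring \<Rightarrow> 'd) \<Rightarrow> nat \<Rightarrow> 'd \<Rightarrow> 'd form set" where
  "family_F bar n a = {form_of_exps bar n a is | is. is \<noteq> []}"

definition box_exps :: "nat list \<Rightarrow> nat list \<Rightarrow> nat list" where
  "box_exps is js = concat (map (\<lambda>i. map (\<lambda>j. i + j) js) is)"

end

theory Submission
  imports Defs
begin

text \<open>The rank of a form on \<open>(D\<^sup>n)\<^sup>k\<close> is \<open>k\<close>, and its parity is an invariant of the Witt class.
  Isometric forms have equal rank, because an \<open>M\<^sub>n(D)\<close>-linear isomorphism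
  \<open>(D\<^sup>n)\<^sup>k\<^sup>1 \<cong> (D\<^sup>n)\<^sup>k\<^sup>2\<close> acts on first columns as an injective \<open>D\<close>-linear map \<open>D\<^sup>k\<^sup>1 \<rightarrow> D\<^sup>k\<^sup>2\<close>.
  A metabolic form has even rank: by Morita equivalence it is a non-singular hermitian form on
  \<open>D\<^sup>k\<close>, the first columns of its Lagrangian form a subspace \<open>V = V\<^sup>\<bottom>\<close>, and non-singularity
  gives \<open>dim V + dim V\<^sup>\<bottom> = k\<close>. Since \<open>h\<^sub>1 \<boxtimes> h\<^sub>2\<close> has rank \<open>rank h\<^sub>1 \<cdot> rank h\<^sub>2\<close>, one factor has
  even rank and so lies in \<open>I(A,\<sigma>)\<close> trivially.\<close>

section \<open>Linear algebra over a division ring\<close>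

text \<open>Vectors of \<open>D\<^sup>k\<close> are functions \<open>nat \<Rightarrow> D\<close> vanishing from \<open>k\<close> on; \<open>D\<^sup>k\<close> is a right
  \<open>D\<close>-vector space, so scalars multiply from the right.\<close>

definition is_vec :: "nat \<Rightarrow> (nat \<Rightarrow> 'd::zero) \<Rightarrow> bool" where
  "is_vec k v \<longleftrightarrow> (\<forall>r\<ge>k. v r = 0)"

definition lin_comb :: "nat set \<Rightarrow> (nat \<Rightarrow> nat \<Rightarrow> 'd::semiring_0) \<Rightarrow> (nat \<Rightarrow> 'd) \<Rightarrow> nat \<Rightarrow> 'd" where
  "lin_comb I W c = (\<lambda>r. \<Sum>i\<in>I. W i r * c i)"

definition lin_indep :: "nat set \<Rightarrow> (nat \<Rightarrow> nat \<Rightarrow> 'd::semiring_0) \<Rightarrow> bool" where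
  "lin_indep I W \<longleftrightarrow> (\<forall>c. lin_comb I W c = (\<lambda>r. 0) \<longrightarrow> (\<forall>i\<in>I. c i = 0))"

definition basis_vec :: "nat \<Rightarrow> nat \<Rightarrow> 'd::{zero,one}" where
  "basis_vec i = (\<lambda>r. if r = i then 1 else 0)"

lemma sum_lessThan_single:
  fixes f :: "nat \<Rightarrow> 'd::comm_monoid_add"
  assumes "i0 < n" "\<And>l. l < n \<Longrightarrow> l \<noteq> i0 \<Longrightarrow> f l = 0"
  shows "(\<Sum>l<n. f l) = f i0"
proof -
  have "(\<Sum>l<n. f l) = f i0 + (\<Sum>l\<in>{..<n} - {i0}. f l)"
    using assms(1) by (simp add: sum.remove)
  also have "(\<Sum>l\<in>{..<n} - {i0}. f l) = 0"
    using assms(2) by (intro sum.neutral) auto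
  finally show ?thesis by simp
qed

lemma lin_comb_empty [simp]: "lin_comb {} W c = (\<lambda>r. 0)"
  by (simp add: lin_comb_def)

lemma lin_comb_insert:
  "finite I \<Longrightarrow> i \<notin> I \<Longrightarrow> lin_comb (insert i I) W c = (\<lambda>r. lin_comb I W c r + W i r * c i)"
  by (simp add: lin_comb_def add.commute)

lemma lin_comb_cong:
  "(\<And>i. i \<in> I \<Longrightarrow> W i = W' i) \<Longrightarrow> (\<And>i. i \<in> I \<Longrightarrow> c i = c' i) \<Longrightarrow> lin_comb I W c = lin_comb I W' c'"
  unfolding lin_comb_def by (intro ext sum.cong) auto

lemma lin_comb_add_interval:
  "lin_comb {..<m + r} W c =
     (\<lambda>x. lin_comb {..<m} W c x + lin_comb {..<r} (\<lambda>s. W (m + s)) (\<lambda>s. c (m + s)) x)"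
proof -
  have "(\<Sum>i<m + r. f i) = (\<Sum>i<m. f i) + (\<Sum>s<r. f (m + s))" for f :: "nat \<Rightarrow> 'a"
    by (induction r) (auto simp: add.assoc)
  then show ?thesis unfolding lin_comb_def by simp
qed

lemma lin_comb_basis_vec: "r < k \<Longrightarrow> lin_comb {..<k} basis_vec c r = (c r :: 'd::semiring_1)"
  by (simp add: lin_comb_def basis_vec_def sum_lessThan_single[of r])

lemma is_vec_basis_vec: "i < k \<Longrightarrow> is_vec k (basis_vec i)"
  by (simp add: is_vec_def basis_vec_def)

lemma is_vec_lin_comb: "\<forall>i\<in>I. is_vec k (W i) \<Longrightarrow> is_vec k (lin_comb I W c)"
  by (simp add: is_vec_def lin_comb_def)

lemma lin_comb_unique:
  fixes W :: "nat \<Rightarrow> nat \<Rightarrow> 'd::ring"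
  assumes "lin_indep I W" "lin_comb I W c1 = lin_comb I W c2" "i \<in> I"
  shows "c1 i = c2 i"
proof -
  have "lin_comb I W (\<lambda>i. c1 i - c2 i) = (\<lambda>r. lin_comb I W c1 r - lin_comb I W c2 r)"
    by (simp add: lin_comb_def fun_eq_iff right_diff_distrib sum_subtractf)
  also have "\<dots> = (\<lambda>r. 0)" using assms(2) by simp
  finally show ?thesis using assms(1,3) unfolding lin_indep_def by fastforce
qed

text \<open>Gaussian elimination of coordinate \<open>k\<close> with the pivot \<open>W j\<close>.\<close>
lemma lin_indep_eliminate_coord:
  fixes W :: "nat \<Rightarrow> nat \<Rightarrow> 'd::division_ring"
  assumes I: "finite I" "\<forall>i\<in>I. is_vec (Suc k) (W i)" "lin_indep I W"
    and j: "j \<in> I" "W j k \<noteq> 0"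
  obtains W' :: "nat \<Rightarrow> nat \<Rightarrow> 'd" where "\<forall>i\<in>I - {j}. is_vec k (W' i)" "lin_indep (I - {j}) W'"
proof -
  define t where "t i = inverse (W j k) * W i k" for i
  define W' where "W' i r = W i r - W j r * t i" for i r
  have "\<forall>i\<in>I - {j}. is_vec k (W' i)"
  proof (intro ballI, unfold is_vec_def, intro allI impI)
    fix i r assume i: "i \<in> I - {j}" and r: "k \<le> r"
    show "W' i r = 0"
    proof (cases "r = k")
      case True
      then show ?thesis using j(2) by (simp add: W'_def t_def mult.assoc[symmetric])
    next
      case False
      then have "Suc k \<le> r" using r by simp
      then show ?thesis using I(2) i j unfolding W'_def is_vec_def by auto
    qed
  qed
  moreover have "lin_indep (I - {j}) W'"
    unfolding lin_indep_def
  proof (intro allI impI)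
    fix c' assume c': "lin_comb (I - {j}) W' c' = (\<lambda>r. 0)"
    define c where "c = c'(j := - (\<Sum>i\<in>I - {j}. t i * c' i))"
    have "lin_comb I W c r = 0" for r
    proof -
      have "0 = (\<Sum>i\<in>I - {j}. W' i r * c' i)"
        using fun_cong[OF c', of r] by (simp add: lin_comb_def)
      also have "\<dots> = (\<Sum>i\<in>I - {j}. W i r * c' i) - W j r * (\<Sum>i\<in>I - {j}. t i * c' i)"
        by (simp add: W'_def algebra_simps sum_subtractf sum_distrib_left)
      finally have e: "(\<Sum>i\<in>I - {j}. W i r * c' i) = W j r * (\<Sum>i\<in>I - {j}. t i * c' i)"
        by (simp add: eq_neg_iff_add_eq_0)
      have "lin_comb I W c r = W j r * c j + (\<Sum>i\<in>I - {j}. W i r * c i)"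
        unfolding lin_comb_def using I(1) j(1) by (simp add: sum.remove)
      also have "(\<Sum>i\<in>I - {j}. W i r * c i) = (\<Sum>i\<in>I - {j}. W i r * c' i)"
        by (rule sum.cong) (auto simp: c_def)
      also have "W j r * c j = - (W j r * (\<Sum>i\<in>I - {j}. t i * c' i))"
        by (simp add: c_def)
      finally show "lin_comb I W c r = 0" using e by simp
    qed
    then have "\<forall>i\<in>I. c i = 0" using I(3) unfolding lin_indep_def by blast
    then show "\<forall>i\<in>I - {j}. c' i = 0" unfolding c_def by (metis DiffE fun_upd_other singletonI)
  qed
  ultimately show thesis by (rule that)
qed

lemma card_le_of_lin_indep:
  fixes W :: "nat \<Rightarrow> nat \<Rightarrow> 'd::division_ring"
  assumes "finite I" "\<forall>i\<in>I. is_vec k (W i)" "lin_indep I W"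
  shows "card I \<le> k"
  using assms
proof (induction k arbitrary: I W)
  case 0
  show ?case
  proof (cases "I = {}")
    case False
    then obtain i where i: "i \<in> I" by auto
    have "lin_comb I W (\<lambda>_. 1) = (\<lambda>r. 0)"
      using "0.prems"(2) by (auto simp: lin_comb_def is_vec_def)
    with "0.prems"(3) i have "(1::'d) = 0" unfolding lin_indep_def by blast
    then show ?thesis by simp
  qed simp
next
  case (Suc k)
  show ?case
  proof (cases "\<forall>i\<in>I. W i k = 0")
    case True
    then have "\<forall>i\<in>I. is_vec k (W i)"
      using Suc.prems(2) unfolding is_vec_def by (metis le_eq_less_or_eq less_eq_Suc_le)
    from Suc.IH[OF Suc.prems(1) this Suc.prems(3)] show ?thesis by simp
  next
    case False
    then obtain j where j: "j \<in> I" "W j k \<noteq> 0" by auto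
    obtain W' :: "nat \<Rightarrow> nat \<Rightarrow> 'd" where "\<forall>i\<in>I - {j}. is_vec k (W' i)" "lin_indep (I - {j}) W'"
      by (rule lin_indep_eliminate_coord[OF Suc.prems j])
    then have "card (I - {j}) \<le> k" using Suc.IH[of "I - {j}" W'] Suc.prems(1) by simp
    then show ?thesis using j(1) Suc.prems(1) by (metis Suc_le_mono card.remove)
  qed
qed

lemma lin_indep_extend:
  fixes W :: "nat \<Rightarrow> nat \<Rightarrow> 'd::division_ring"
  assumes "lin_indep {..<m} W" "\<nexists>c. v = lin_comb {..<m} W c"
  shows "lin_indep {..<Suc m} (W(m := v))"
  unfolding lin_indep_def
proof (intro allI impI)
  fix c assume c: "lin_comb {..<Suc m} (W(m := v)) c = (\<lambda>r. 0)"
  have "lin_comb {..<m} (W(m := v)) c = lin_comb {..<m} W c"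
    by (rule lin_comb_cong) auto
  then have sum: "lin_comb {..<m} W c r + v r * c m = 0" for r
    using fun_cong[OF c, of r] by (simp add: lessThan_Suc lin_comb_insert)
  have cm: "c m = 0"
  proof (rule ccontr)
    assume cm: "c m \<noteq> 0"
    have "v r = lin_comb {..<m} W (\<lambda>i. - (c i * inverse (c m))) r" for r
    proof -
      have "v r * c m = - lin_comb {..<m} W c r"
        using sum[of r] by (simp add: eq_neg_iff_add_eq_0 add.commute)
      then have "v r = - lin_comb {..<m} W c r * inverse (c m)"
        using cm by (metis mult.assoc right_inverse mult_1_right)
      then show ?thesis by (simp add: lin_comb_def sum_distrib_right mult.assoc sum_negf)
    qed
    then show False using assms(2) by blast
  qed
  then have "lin_comb {..<m} W c = (\<lambda>r. 0)" using sum by auto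
  then have "\<forall>i<m. c i = 0" using assms(1) unfolding lin_indep_def by blast
  then show "\<forall>i\<in>{..<Suc m}. c i = 0" using cm by (auto simp: less_Suc_eq)
qed

lemma exists_spanning_extension:
  fixes U :: "nat \<Rightarrow> nat \<Rightarrow> 'd::division_ring"
  assumes S: "\<forall>v\<in>S. is_vec k v" and U: "\<forall>i<m. U i \<in> S" "lin_indep {..<m} U"
  shows "\<exists>r W. (\<forall>i<m. W i = U i) \<and> (\<forall>i<m + r. W i \<in> S) \<and> lin_indep {..<m + r} W \<and>
    (\<forall>v\<in>S. \<exists>c. v = lin_comb {..<m + r} W c)"
proof -
  define P where
    "P r \<longleftrightarrow> (\<exists>W. (\<forall>i<m. W i = U i) \<and> (\<forall>i<m + r. W i \<in> S) \<and> lin_indep {..<m + r} W)" for r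
  have "P 0" unfolding P_def using U by auto
  moreover have "\<not> P (Suc k)"
  proof
    assume "P (Suc k)"
    then obtain W where "\<forall>i<m + Suc k. W i \<in> S" "lin_indep {..<m + Suc k} W"
      unfolding P_def by blast
    then have "card {..<m + Suc k} \<le> k" using S by (intro card_le_of_lin_indep) auto
    then show False by simp
  qed
  moreover have "\<exists>r. P r \<and> \<not> P (Suc r)" if "P 0" "\<not> P N" for N
    using that by (induction N) auto
  ultimately obtain r where r: "P r" "\<not> P (Suc r)" by blast
  then obtain W where W: "\<forall>i<m. W i = U i" "\<forall>i<m + r. W i \<in> S" "lin_indep {..<m + r} W"
    unfolding P_def by blast
  have "\<forall>v\<in>S. \<exists>c. v = lin_comb {..<m + r} W c"
  proof (rule ccontr)
    assume "\<not> ?thesis"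
    then obtain v where v: "v \<in> S" "\<nexists>c. v = lin_comb {..<m + r} W c" by blast
    have "P (Suc r)" unfolding P_def
      using W v lin_indep_extend[OF W(3) v(2)] by (intro exI[of _ "W(m + r := v)"]) (auto simp: less_Suc_eq)
    then show False using r by simp
  qed
  with W show ?thesis by blast
qed

lemma linear_lin_comb:
  fixes \<psi> :: "(nat \<Rightarrow> 'd::division_ring) \<Rightarrow> nat \<Rightarrow> 'd"
  assumes add: "\<And>v w. is_vec k v \<Longrightarrow> is_vec k w \<Longrightarrow> \<psi> (\<lambda>r. v r + w r) = (\<lambda>r. \<psi> v r + \<psi> w r)"
    and scale: "\<And>v d. is_vec k v \<Longrightarrow> \<psi> (\<lambda>r. v r * d) = (\<lambda>r. \<psi> v r * d)"
    and "finite I" "\<forall>i\<in>I. is_vec k (W i)"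
  shows "\<psi> (lin_comb I W c) = lin_comb I (\<lambda>i. \<psi> (W i)) c"
  using assms(3,4)
proof (induction I rule: finite_induct)
  case empty
  have "\<psi> (\<lambda>r. (\<lambda>r. 0) r * 0) = (\<lambda>r. \<psi> (\<lambda>r. 0) r * 0)" by (rule scale) (simp add: is_vec_def)
  then show ?case by simp
next
  case (insert i I)
  have "\<psi> (lin_comb (insert i I) W c) = \<psi> (\<lambda>r. lin_comb I W c r + W i r * c i)"
    using insert by (simp add: lin_comb_insert)
  also have "\<dots> = (\<lambda>r. \<psi> (lin_comb I W c) r + \<psi> (\<lambda>r. W i r * c i) r)"
    using insert by (intro add is_vec_lin_comb) (auto simp: is_vec_def)
  also have "\<psi> (\<lambda>r. W i r * c i) = (\<lambda>r. \<psi> (W i) r * c i)" using insert by (intro scale) auto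
  finally show ?case using insert by (simp add: lin_comb_insert)
qed

lemma card_le_of_spanning:
  fixes W :: "nat \<Rightarrow> nat \<Rightarrow> 'd::division_ring"
  assumes "\<And>v. is_vec k v \<Longrightarrow> \<exists>c. v = lin_comb {..<N} W c"
  shows "k \<le> N"
proof -
  define a where "a t = (SOME c. basis_vec t = lin_comb {..<N} W c)" for t
  have a: "basis_vec t = lin_comb {..<N} W (a t)" if "t < k" for t
    unfolding a_def by (rule someI_ex[OF assms[OF is_vec_basis_vec[OF that]]])
  define F where "F t = (\<lambda>i. if i < N then a t i else 0)" for t
  have "lin_indep {..<k} F"
    unfolding lin_indep_def
  proof (intro allI impI ballI)
    fix c t assume c: "lin_comb {..<k} F c = (\<lambda>r. 0)" and t: "t \<in> {..<k}"
    have "c t = (\<Sum>s<k. basis_vec s t * c s)"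
      using lin_comb_basis_vec[of t k c] t by (simp add: lin_comb_def)
    also have "\<dots> = (\<Sum>s<k. (\<Sum>i<N. W i t * a s i) * c s)"
      by (rule sum.cong) (auto simp: a lin_comb_def)
    also have "\<dots> = (\<Sum>i<N. W i t * (\<Sum>s<k. a s i * c s))"
      by (simp add: sum_distrib_right sum_distrib_left mult.assoc sum.swap[of _ "{..<k}"])
    also have "\<dots> = 0"
    proof -
      have "(\<Sum>s<k. a s i * c s) = 0" if "i < N" for i
        using fun_cong[OF c, of i] that by (simp add: lin_comb_def F_def)
      then show ?thesis by simp
    qed
    finally show "c t = 0" .
  qed
  moreover have "\<forall>t\<in>{..<k}. is_vec N (F t)" by (simp add: F_def is_vec_def)
  ultimately show ?thesis using card_le_of_lin_indep[of "{..<k}" N F] by simp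
qed

lemma card_le_of_inj_linear:
  fixes \<psi> :: "(nat \<Rightarrow> 'd::division_ring) \<Rightarrow> nat \<Rightarrow> 'd"
  assumes add: "\<And>v w. is_vec k1 v \<Longrightarrow> is_vec k1 w \<Longrightarrow> \<psi> (\<lambda>r. v r + w r) = (\<lambda>r. \<psi> v r + \<psi> w r)"
    and scale: "\<And>v d. is_vec k1 v \<Longrightarrow> \<psi> (\<lambda>r. v r * d) = (\<lambda>r. \<psi> v r * d)"
    and vec: "\<And>v. is_vec k1 v \<Longrightarrow> is_vec k2 (\<psi> v)"
    and inj: "\<And>v. is_vec k1 v \<Longrightarrow> \<psi> v = (\<lambda>r. 0) \<Longrightarrow> v = (\<lambda>r. 0)"
  shows "k1 \<le> k2"
proof -
  have bv: "\<forall>i\<in>{..<k1}. is_vec k1 (basis_vec i)" by (simp add: is_vec_basis_vec)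
  have "lin_indep {..<k1} (\<lambda>i. \<psi> (basis_vec i))"
    unfolding lin_indep_def
  proof (intro allI impI ballI)
    fix c i assume c: "lin_comb {..<k1} (\<lambda>i. \<psi> (basis_vec i)) c = (\<lambda>r. 0)" and i: "i \<in> {..<k1}"
    have "\<psi> (lin_comb {..<k1} basis_vec c) = lin_comb {..<k1} (\<lambda>i. \<psi> (basis_vec i)) c"
      by (rule linear_lin_comb[where k = k1]) (simp_all add: add scale bv)
    with c have "\<psi> (lin_comb {..<k1} basis_vec c) = (\<lambda>r. 0)" by simp
    then have "lin_comb {..<k1} basis_vec c = (\<lambda>r. 0)"
      by (rule inj[OF is_vec_lin_comb[OF bv]])
    from fun_cong[OF this, of i] show "c i = 0" using lin_comb_basis_vec[of i k1 c] i by simp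
  qed
  moreover have "\<forall>i\<in>{..<k1}. is_vec k2 (\<psi> (basis_vec i))" by (auto intro: vec is_vec_basis_vec)
  ultimately show ?thesis using card_le_of_lin_indep[of "{..<k1}" k2] by simp
qed

locale vec_basis =
  fixes k N :: nat and W :: "nat \<Rightarrow> nat \<Rightarrow> 'd::division_ring"
  assumes basis_is_vec: "\<And>i. i < N \<Longrightarrow> is_vec k (W i)"
    and basis_indep: "lin_indep {..<N} W"
    and basis_spans: "\<And>v. is_vec k v \<Longrightarrow> \<exists>c. v = lin_comb {..<N} W c"
begin

lemma card_eq: "N = k"
proof (rule antisym)
  show "N \<le> k"
    using card_le_of_lin_indep[of "{..<N}" k W] basis_is_vec basis_indep by simp
  show "k \<le> N"
    by (rule card_le_of_spanning[OF basis_spans])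
qed

definition coord :: "(nat \<Rightarrow> 'd) \<Rightarrow> nat \<Rightarrow> 'd" where
  "coord v = (SOME c. v = lin_comb {..<N} W c)"

lemma lin_comb_coord: "is_vec k v \<Longrightarrow> v = lin_comb {..<N} W (coord v)"
  unfolding coord_def by (rule someI_ex[OF basis_spans])

lemma coord_eqI:
  assumes "v = lin_comb {..<N} W c" "is_vec k v" "i < N"
  shows "coord v i = c i"
proof -
  have "lin_comb {..<N} W (coord v) = v"
    by (rule lin_comb_coord[OF assms(2), symmetric])
  also have "\<dots> = lin_comb {..<N} W c"
    by (rule assms(1))
  finally show ?thesis using lin_comb_unique[OF basis_indep] assms(3) by blast
qed

lemma coord_add:
  assumes "is_vec k v" "is_vec k w" "i < N"
  shows "coord (\<lambda>x. v x + w x) i = coord v i + coord w i"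
proof (rule coord_eqI)
  have "lin_comb {..<N} W (\<lambda>i. coord v i + coord w i) =
      (\<lambda>x. lin_comb {..<N} W (coord v) x + lin_comb {..<N} W (coord w) x)"
    by (simp add: lin_comb_def distrib_left sum.distrib)
  then show "(\<lambda>x. v x + w x) = lin_comb {..<N} W (\<lambda>i. coord v i + coord w i)"
    using lin_comb_coord[OF assms(1), symmetric] lin_comb_coord[OF assms(2), symmetric] by simp
qed (use assms in \<open>auto simp: is_vec_def\<close>)

lemma coord_scale:
  assumes "is_vec k v" "i < N"
  shows "coord (\<lambda>x. v x * d) i = coord v i * d"
proof (rule coord_eqI)
  have "lin_comb {..<N} W (\<lambda>i. coord v i * d) = (\<lambda>x. lin_comb {..<N} W (coord v) x * d)"
    by (simp add: lin_comb_def sum_distrib_right mult.assoc)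
  then show "(\<lambda>x. v x * d) = lin_comb {..<N} W (\<lambda>i. coord v i * d)"
    using lin_comb_coord[OF assms(1), symmetric] by simp
qed (use assms in \<open>auto simp: is_vec_def\<close>)

lemma coord_lin_comb:
  assumes "finite I" "\<forall>l\<in>I. is_vec k (V l)" "i < N"
  shows "coord (lin_comb I V c) i = (\<Sum>l\<in>I. coord (V l) i * c l)"
proof -
  have "(\<lambda>x. coord (lin_comb I V c) i) = lin_comb I (\<lambda>l x. coord (V l) i) c"
    by (rule linear_lin_comb[where \<psi> = "\<lambda>v x. coord v i"]) (use coord_add coord_scale assms in auto)
  from fun_cong[OF this, of 0] show ?thesis by (simp add: lin_comb_def)
qed

lemma coord_basis: "j < N \<Longrightarrow> p < N \<Longrightarrow> coord (W j) p = basis_vec j p"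
  by (rule coord_eqI) (auto simp: lin_comb_def basis_vec_def basis_is_vec sum_lessThan_single[of j])

end

section \<open>Matrices and column vectors\<close>

lemma index_mult_mat_sum:
  assumes "A \<in> carrier_mat nr m" "B \<in> carrier_mat m nc" "i < nr" "j < nc"
  shows "(A * B) $$ (i,j) = (\<Sum>l<m. A $$ (i,l) * B $$ (l,j))"
  using assms by (auto simp: scalar_prod_def lessThan_atLeast0)

lemma mat_add_self_eq_zero:
  fixes A :: "'a::group_add mat"
  assumes "A \<in> carrier_mat m n" "A + A = A"
  shows "A = 0\<^sub>m m n"
proof (rule eq_matI)
  fix i j assume ij: "i < dim_row (0\<^sub>m m n :: 'a mat)" "j < dim_col (0\<^sub>m m n :: 'a mat)"
  then have "A $$ (i,j) + A $$ (i,j) = A $$ (i,j)"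
    using assms by (metis carrier_matD index_add_mat(1) index_zero_mat(2,3))
  then have "A $$ (i,j) = 0" by (metis add.right_neutral add_left_cancel)
  then show "A $$ (i,j) = 0\<^sub>m m n $$ (i,j)" using ij by simp
qed (use assms in auto)

text \<open>A \<open>k \<times> n\<close> matrix is an element of \<open>(D\<^sup>n)\<^sup>k\<close>; its columns are vectors of \<open>D\<^sup>k\<close>, and a vector
  of \<open>D\<^sup>k\<close> is put back as the first column of an otherwise zero matrix.\<close>

definition col_fun :: "nat \<Rightarrow> 'd::zero mat \<Rightarrow> nat \<Rightarrow> 'd" where
  "col_fun j x = (\<lambda>r. if r < dim_row x then x $$ (r,j) else 0)"

definition col_mat :: "nat \<Rightarrow> nat \<Rightarrow> (nat \<Rightarrow> 'd::zero) \<Rightarrow> 'd mat" where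
  "col_mat k n v = mat k n (\<lambda>(r,j). if j = 0 then v r else 0)"

definition corner_mat :: "nat \<Rightarrow> 'd::zero \<Rightarrow> 'd mat" where
  "corner_mat n d = mat n n (\<lambda>(i,j). if i = 0 \<and> j = 0 then d else 0)"

definition matrix_unit :: "nat \<Rightarrow> nat \<Rightarrow> nat \<Rightarrow> 'd::{zero,one} mat" where
  "matrix_unit n i j = mat n n (\<lambda>(l,m). if l = i \<and> m = j then 1 else 0)"

lemma col_mat_carrier [simp]: "col_mat k n v \<in> carrier_mat k n"
  and corner_mat_carrier [simp]: "corner_mat n d \<in> carrier_mat n n"
  and matrix_unit_carrier [simp]: "matrix_unit n i j \<in> carrier_mat n n"
  by (simp_all add: col_mat_def corner_mat_def matrix_unit_def)

lemma col_mat_dim [simp]: "dim_row (col_mat k n v) = k" "dim_col (col_mat k n v) = n"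
  and corner_mat_dim [simp]: "dim_row (corner_mat n d) = n" "dim_col (corner_mat n d) = n"
  and matrix_unit_dim [simp]: "dim_row (matrix_unit n i j) = n" "dim_col (matrix_unit n i j) = n"
  by (simp_all add: col_mat_def corner_mat_def matrix_unit_def)

lemma col_mat_add: "col_mat k n (\<lambda>r. v r + w r) = col_mat k n v + col_mat k n (w :: nat \<Rightarrow> 'd::monoid_add)"
  by (rule eq_matI) (auto simp: col_mat_def)

lemma col_mat_zero: "col_mat k n (\<lambda>r. 0) = 0\<^sub>m k n"
  by (rule eq_matI) (auto simp: col_mat_def)

lemma col_mat_scale:
  fixes v :: "nat \<Rightarrow> 'd::semiring_0"
  assumes "0 < n"
  shows "col_mat k n (\<lambda>r. v r * d) = col_mat k n v * corner_mat n d"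
proof (rule eq_matI)
  fix i j assume "i < dim_row (col_mat k n v * corner_mat n d)" "j < dim_col (col_mat k n v * corner_mat n d)"
  then have ij: "i < k" "j < n" by (auto simp: corner_mat_def)
  have "(col_mat k n v * corner_mat n d) $$ (i,j) = (\<Sum>l<n. col_mat k n v $$ (i,l) * corner_mat n d $$ (l,j))"
    using ij by (intro index_mult_mat_sum) auto
  also have "\<dots> = col_mat k n v $$ (i,0) * corner_mat n d $$ (0,j)"
    using assms ij by (intro sum_lessThan_single) (auto simp: col_mat_def)
  finally show "col_mat k n (\<lambda>r. v r * d) $$ (i, j) = (col_mat k n v * corner_mat n d) $$ (i, j)"
    using ij assms by (auto simp: col_mat_def corner_mat_def)
qed (auto simp: corner_mat_def)

lemma col_fun_col_mat: "is_vec k v \<Longrightarrow> 0 < n \<Longrightarrow> col_fun 0 (col_mat k n v) = v"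
  by (auto simp: col_fun_def col_mat_def is_vec_def fun_eq_iff)

lemma is_vec_col_fun: "x \<in> carrier_mat k n \<Longrightarrow> is_vec k (col_fun j x)"
  by (auto simp: col_fun_def is_vec_def)

lemma col_mat_eq_zero: "is_vec k v \<Longrightarrow> 0 < n \<Longrightarrow> col_mat k n v = 0\<^sub>m k n \<Longrightarrow> v = (\<lambda>r. 0)"
  by (metis col_mat_zero col_fun_col_mat is_vec_def)

lemma col_fun_add:
  fixes x :: "'d::monoid_add mat"
  shows "x \<in> carrier_mat k n \<Longrightarrow> y \<in> carrier_mat k n \<Longrightarrow> j < n \<Longrightarrow>
    col_fun j (x + y) = (\<lambda>r. col_fun j x r + col_fun j y r)"
  by (auto simp: col_fun_def fun_eq_iff)

lemma col_fun_mult_corner: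
  fixes x :: "'d::semiring_0 mat"
  assumes "x \<in> carrier_mat k n" "0 < n"
  shows "col_fun 0 (x * corner_mat n d) = (\<lambda>r. col_fun 0 x r * d)"
proof
  fix r
  show "col_fun 0 (x * corner_mat n d) r = col_fun 0 x r * d"
  proof (cases "r < k")
    case True
    have "(x * corner_mat n d) $$ (r,0) = (\<Sum>l<n. x $$ (r,l) * corner_mat n d $$ (l,0))"
      using assms True by (intro index_mult_mat_sum[of _ k n]) auto
    also have "\<dots> = x $$ (r,0) * corner_mat n d $$ (0,0)"
      using assms by (intro sum_lessThan_single) (auto simp: corner_mat_def)
    finally show ?thesis using assms True by (auto simp: col_fun_def corner_mat_def)
  qed (use assms in \<open>auto simp: col_fun_def\<close>)
qed

lemma mult_matrix_unit_col:
  fixes x :: "'d::semiring_1 mat"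
  assumes x: "x \<in> carrier_mat k n" and i: "i < n"
  shows "x * matrix_unit n i 0 = col_mat k n (col_fun i x)"
proof (rule eq_matI)
  fix r j assume "r < dim_row (col_mat k n (col_fun i x))" "j < dim_col (col_mat k n (col_fun i x))"
  then have rj: "r < k" "j < n" by simp_all
  have "(x * matrix_unit n i 0) $$ (r,j) = (\<Sum>l<n. x $$ (r,l) * matrix_unit n i 0 $$ (l,j))"
    using rj x by (intro index_mult_mat_sum[of _ k n]) auto
  also have "\<dots> = x $$ (r,i) * matrix_unit n i 0 $$ (i,j)"
    using i rj by (intro sum_lessThan_single) (auto simp: matrix_unit_def)
  finally show "(x * matrix_unit n i 0) $$ (r,j) = col_mat k n (col_fun i x) $$ (r,j)"
    using rj i x by (auto simp: col_mat_def matrix_unit_def col_fun_def)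
qed (use x in auto)

lemma col_mat_col_fun_self: "col_mat k n (col_fun 0 (col_mat k n v)) = col_mat k n v"
  by (rule eq_matI) (auto simp: col_mat_def col_fun_def)

lemma index_mult_matrix_unit_00:
  fixes M :: "'d::semiring_1 mat"
  assumes "M \<in> carrier_mat m n" "i < m" "j < n"
  shows "(M * matrix_unit n 0 0) $$ (i,j) = (if j = 0 then M $$ (i,0) else 0)"
proof -
  have "(M * matrix_unit n 0 0) $$ (i,j) = (\<Sum>l<n. M $$ (i,l) * matrix_unit n 0 0 $$ (l,j))"
    using assms by (intro index_mult_mat_sum[of _ _ n]) auto
  also have "\<dots> = M $$ (i,0) * matrix_unit n 0 0 $$ (0,j)"
    using assms by (intro sum_lessThan_single) (auto simp: matrix_unit_def)
  finally show ?thesis using assms by (auto simp: matrix_unit_def)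
qed

lemma index_matrix_unit_mult_00:
  fixes M :: "'d::semiring_1 mat"
  assumes "M \<in> carrier_mat n n" "i < n"
  shows "(matrix_unit n 0 i * M) $$ (0,0) = M $$ (i,0)"
proof -
  have "(matrix_unit n 0 i * M) $$ (0,0) = (\<Sum>l<n. matrix_unit n 0 i $$ (0,l) * M $$ (l,0))"
    using assms by (intro index_mult_mat_sum[of _ _ n]) auto
  also have "\<dots> = matrix_unit n 0 i $$ (0,i) * M $$ (i,0)"
    using assms by (intro sum_lessThan_single) (auto simp: matrix_unit_def)
  finally show ?thesis using assms by (auto simp: matrix_unit_def)
qed

definition functional_row :: "nat \<Rightarrow> ((nat \<Rightarrow> 'd) \<Rightarrow> 'd::zero) \<Rightarrow> 'd mat \<Rightarrow> 'd mat" where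
  "functional_row n \<phi> x = mat n n (\<lambda>(i,j). if i = 0 then \<phi> (col_fun j x) else 0)"

lemma A_linear_functional_row:
  fixes \<phi> :: "(nat \<Rightarrow> 'd::division_ring) \<Rightarrow> 'd"
  assumes add: "\<And>v w. is_vec k v \<Longrightarrow> is_vec k w \<Longrightarrow> \<phi> (\<lambda>r. v r + w r) = \<phi> v + \<phi> w"
    and scale: "\<And>v d. is_vec k v \<Longrightarrow> \<phi> (\<lambda>r. v r * d) = \<phi> v * d"
  shows "A_linear n k (functional_row n \<phi>)"
proof -
  let ?g = "functional_row n \<phi>"
  have \<phi>_lin_comb: "\<phi> (lin_comb I V c) = (\<Sum>l\<in>I. \<phi> (V l) * c l)"
    if "finite I" "\<forall>l\<in>I. is_vec k (V l)" for I V c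
  proof -
    have "(\<lambda>r. \<phi> (lin_comb I V c)) = lin_comb I (\<lambda>l r. \<phi> (V l)) c"
      by (rule linear_lin_comb[where \<psi> = "\<lambda>v r. \<phi> v"]) (use add scale that in auto)
    from fun_cong[OF this, of 0] show ?thesis by (simp add: lin_comb_def)
  qed
  show ?thesis
    unfolding A_linear_def
  proof (intro conjI ballI)
    fix x y :: "'d mat" assume "x \<in> carrier_mat k n" "y \<in> carrier_mat k n"
    then show "?g (x + y) = ?g x + ?g y"
      by (intro eq_matI) (auto simp: functional_row_def col_fun_add is_vec_col_fun add)
  next
    fix x a :: "'d mat" assume x: "x \<in> carrier_mat k n" and a: "a \<in> carrier_mat n n"
    show "?g (x * a) = ?g x * a"
    proof (rule eq_matI)
      fix i j assume "i < dim_row (?g x * a)" "j < dim_col (?g x * a)"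
      then have ij: "i < n" "j < n" using a by (auto simp: functional_row_def)
      have "col_fun j (x * a) = lin_comb {..<n} (\<lambda>l. col_fun l x) (\<lambda>l. a $$ (l,j))"
        using x a ij index_mult_mat_sum[OF x a] by (auto simp: col_fun_def lin_comb_def)
      then have "\<phi> (col_fun j (x * a)) = (\<Sum>l<n. \<phi> (col_fun l x) * a $$ (l,j))"
        using \<phi>_lin_comb is_vec_col_fun[OF x] by simp
      also have "\<dots> = (\<Sum>l<n. ?g x $$ (0,l) * a $$ (l,j))"
        by (rule sum.cong) (auto simp: functional_row_def)
      finally show "?g (x * a) $$ (i,j) = (?g x * a) $$ (i,j)"
        using ij a index_mult_mat_sum[of "?g x" n n a n i j]
        by (auto simp: functional_row_def intro!: sum.neutral)
    qed (use a in \<open>auto simp: functional_row_def\<close>)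
  qed (simp add: functional_row_def)
qed

definition module_iso :: "nat \<Rightarrow> nat \<Rightarrow> nat \<Rightarrow> ('d::semiring_0 mat \<Rightarrow> 'd mat) \<Rightarrow> bool" where
  "module_iso n k1 k2 \<phi> \<longleftrightarrow> bij_betw \<phi> (carrier_mat k1 n) (carrier_mat k2 n) \<and>
     (\<forall>x\<in>carrier_mat k1 n. \<forall>y\<in>carrier_mat k1 n. \<phi> (x + y) = \<phi> x + \<phi> y) \<and>
     (\<forall>x\<in>carrier_mat k1 n. \<forall>a\<in>carrier_mat n n. \<phi> (x * a) = \<phi> x * a)"

text \<open>Multiplying by the matrix unit \<open>E\<^sub>0\<^sub>0\<close> shows that \<open>\<phi>\<close> maps matrices supported in the first
  column to such matrices, so it induces an injective \<open>D\<close>-linear map \<open>D\<^sup>k\<^sup>1 \<rightarrow> D\<^sup>k\<^sup>2\<close>.\<close>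
lemma module_iso_card_le:
  fixes \<phi> :: "'d::division_ring mat \<Rightarrow> 'd mat"
  assumes "module_iso n k1 k2 \<phi>" and n: "0 < n"
  shows "k1 \<le> k2"
proof -
  have bij: "bij_betw \<phi> (carrier_mat k1 n) (carrier_mat k2 n)"
    and add: "\<And>x y. x \<in> carrier_mat k1 n \<Longrightarrow> y \<in> carrier_mat k1 n \<Longrightarrow> \<phi> (x + y) = \<phi> x + \<phi> y"
    and mult: "\<And>x a. x \<in> carrier_mat k1 n \<Longrightarrow> a \<in> carrier_mat n n \<Longrightarrow> \<phi> (x * a) = \<phi> x * a"
    using assms unfolding module_iso_def by auto
  have car: "\<And>x. x \<in> carrier_mat k1 n \<Longrightarrow> \<phi> x \<in> carrier_mat k2 n"
    by (rule bij_betw_apply[OF bij])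
  define \<psi> where "\<psi> v = col_fun 0 (\<phi> (col_mat k1 n v))" for v :: "nat \<Rightarrow> 'd"
  have first_col: "\<phi> (col_mat k1 n v) = col_mat k2 n (\<psi> v)" for v
  proof -
    have "col_mat k1 n v * matrix_unit n 0 0 = col_mat k1 n v"
      using mult_matrix_unit_col[OF col_mat_carrier n] by (simp add: col_mat_col_fun_self)
    then have "\<phi> (col_mat k1 n v) = \<phi> (col_mat k1 n v * matrix_unit n 0 0)"
      by simp
    also have "\<dots> = col_mat k2 n (\<psi> v)"
      using mult car mult_matrix_unit_col[OF car[OF col_mat_carrier] n] by (simp add: \<psi>_def)
    finally show ?thesis .
  qed
  have zero: "\<phi> (0\<^sub>m k1 n) = 0\<^sub>m k2 n"
    using add[of "0\<^sub>m k1 n" "0\<^sub>m k1 n"] by (intro mat_add_self_eq_zero car) auto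
  show ?thesis
  proof (rule card_le_of_inj_linear)
    show "\<psi> (\<lambda>r. v r + w r) = (\<lambda>r. \<psi> v r + \<psi> w r)" for v w
      unfolding \<psi>_def col_mat_add using add col_fun_add[OF car car n] by simp
    show "\<psi> (\<lambda>r. v r * d) = (\<lambda>r. \<psi> v r * d)" for v d
      unfolding \<psi>_def col_mat_scale[OF n] using mult col_fun_mult_corner[OF car n] by simp
    show "is_vec k2 (\<psi> v)" for v
      unfolding \<psi>_def by (rule is_vec_col_fun[OF car]) simp
    show "v = (\<lambda>r. 0)" if "is_vec k1 v" "\<psi> v = (\<lambda>r. 0)" for v
    proof -
      have "\<phi> (col_mat k1 n v) = \<phi> (0\<^sub>m k1 n)"
        using first_col[of v] that(2) zero by (simp add: col_mat_zero)
      then have "col_mat k1 n v = 0\<^sub>m k1 n"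
        using bij by (auto simp: bij_betw_def dest: inj_onD)
      then show ?thesis using col_mat_eq_zero that(1) n by blast
    qed
  qed
qed

lemma module_iso_inv:
  fixes \<phi> :: "'d::division_ring mat \<Rightarrow> 'd mat"
  assumes "module_iso n k1 k2 \<phi>"
  shows "module_iso n k2 k1 (inv_into (carrier_mat k1 n) \<phi>)"
proof -
  let ?C1 = "carrier_mat k1 n :: 'd mat set" and ?C2 = "carrier_mat k2 n :: 'd mat set"
  let ?\<chi> = "inv_into ?C1 \<phi>"
  have bij: "bij_betw \<phi> ?C1 ?C2"
    and add: "\<And>x y. x \<in> ?C1 \<Longrightarrow> y \<in> ?C1 \<Longrightarrow> \<phi> (x + y) = \<phi> x + \<phi> y"
    and mult: "\<And>x a. x \<in> ?C1 \<Longrightarrow> a \<in> carrier_mat n n \<Longrightarrow> \<phi> (x * a) = \<phi> x * a"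
    using assms unfolding module_iso_def by auto
  have bij_inv: "bij_betw ?\<chi> ?C2 ?C1" by (rule bij_betw_inv_into[OF bij])
  have inv_mem: "x \<in> ?C2 \<Longrightarrow> ?\<chi> x \<in> ?C1" for x by (rule bij_betw_apply[OF bij_inv])
  have right: "x \<in> ?C2 \<Longrightarrow> \<phi> (?\<chi> x) = x" for x using bij by (meson bij_betw_inv_into_right)
  have left: "x \<in> ?C1 \<Longrightarrow> ?\<chi> (\<phi> x) = x" for x using bij by (meson bij_betw_inv_into_left)
  have "?\<chi> (x + y) = ?\<chi> x + ?\<chi> y" if "x \<in> ?C2" "y \<in> ?C2" for x y
    using left[of "?\<chi> x + ?\<chi> y"] add inv_mem right that by simp
  moreover have "?\<chi> (x * a) = ?\<chi> x * a" if "x \<in> ?C2" "a \<in> carrier_mat n n" for x a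
    using left[OF mult_carrier_mat[OF inv_mem[OF that(1)] that(2)]] mult inv_mem right that by simp
  ultimately show ?thesis using bij_inv unfolding module_iso_def by blast
qed

lemma isometric_rank:
  fixes f g :: "'d::division_ring form"
  assumes "isometric n f g" "0 < n"
  shows "rank f = rank g"
proof -
  obtain k1 h1 k2 h2 where fg: "f = (k1,h1)" "g = (k2,h2)" by (cases f, cases g)
  then obtain \<phi> :: "'d mat \<Rightarrow> 'd mat" where "module_iso n k1 k2 \<phi>"
    using assms(1) unfolding isometric_def module_iso_def by auto
  then have "k1 \<le> k2" "k2 \<le> k1"
    using module_iso_card_le module_iso_inv assms(2) by blast+
  then show ?thesis by (simp add: fg rank_def)
qed

section \<open>Hermitian forms over \<open>M\<^sub>n(D)\<close>\<close>

locale involution =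
  fixes bar :: "'d::division_ring \<Rightarrow> 'd"
  assumes bar_add: "\<And>x y. bar (x + y) = bar x + bar y"
    and bar_mult: "\<And>x y. bar (x * y) = bar y * bar x"
    and bar_bar: "\<And>x. bar (bar x) = x"
begin

lemma bar_zero [simp]: "bar 0 = 0"
  using bar_add[of 0 0] by simp

lemma bar_one [simp]: "bar 1 = 1"
  using bar_mult[of "bar 1" 1] by (simp add: bar_bar)

lemma bar_sum: "bar (\<Sum>i\<in>I. f i) = (\<Sum>i\<in>I. bar (f i))"
  by (induction I rule: infinite_finite_induct) (auto simp: bar_add)

lemma bar_power: "bar a = a \<Longrightarrow> bar (a ^ i) = a ^ i"
  by (induction i) (auto simp: bar_mult power_commutes)

lemma index_sigma [simp]: "i < dim_col A \<Longrightarrow> j < dim_row A \<Longrightarrow> sigma bar A $$ (i,j) = bar (A $$ (j,i))"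
  unfolding sigma_def by (subst index_transpose_mat) auto

lemma sigma_dim [simp]: "dim_row (sigma bar A) = dim_col A" "dim_col (sigma bar A) = dim_row A"
  unfolding sigma_def by auto

lemma sigma_carrier [simp]: "A \<in> carrier_mat n n \<Longrightarrow> sigma bar A \<in> carrier_mat n n"
  unfolding sigma_def carrier_mat_def by auto

lemma sigma_add: "A \<in> carrier_mat n n \<Longrightarrow> B \<in> carrier_mat n n \<Longrightarrow> sigma bar (A + B) = sigma bar A + sigma bar B"
  by (rule eq_matI) (auto simp: bar_add)

lemma sigma_zero [simp]: "sigma bar (0\<^sub>m n n) = 0\<^sub>m n n"
  by (rule eq_matI) auto

lemma sigma_one [simp]: "sigma bar (1\<^sub>m n) = 1\<^sub>m n"
  by (rule eq_matI) auto

lemma sigma_matrix_unit [simp]: "sigma bar (matrix_unit n i j) = matrix_unit n j i"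
  by (rule eq_matI) (auto simp: matrix_unit_def)

end

lemma involution_if_F_involution: "F_involution Fs bar \<Longrightarrow> involution bar"
  unfolding F_involution_def involution_def by auto

lemma herm_formI:
  assumes "\<And>x y. x \<in> carrier_mat k n \<Longrightarrow> y \<in> carrier_mat k n \<Longrightarrow> h x y \<in> carrier_mat n n"
    and "\<And>x y z. x \<in> carrier_mat k n \<Longrightarrow> y \<in> carrier_mat k n \<Longrightarrow> z \<in> carrier_mat k n \<Longrightarrow>
      h (x + y) z = h x z + h y z"
    and "\<And>x y z. x \<in> carrier_mat k n \<Longrightarrow> y \<in> carrier_mat k n \<Longrightarrow> z \<in> carrier_mat k n \<Longrightarrow>
      h z (x + y) = h z x + h z y"
    and "\<And>x y a b. x \<in> carrier_mat k n \<Longrightarrow> y \<in> carrier_mat k n \<Longrightarrow> a \<in> carrier_mat n n \<Longrightarrow>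
      b \<in> carrier_mat n n \<Longrightarrow> h (x * a) (y * b) = sigma bar a * h x y * b"
    and "\<And>x y. x \<in> carrier_mat k n \<Longrightarrow> y \<in> carrier_mat k n \<Longrightarrow> h y x = sigma bar (h x y)"
    and "\<And>g. A_linear n k g \<Longrightarrow> \<exists>!y. y \<in> carrier_mat k n \<and> (\<forall>x\<in>carrier_mat k n. g x = h y x)"
  shows "herm_form bar n (k, h)"
  unfolding herm_form_def prod.case by (intro conjI ballI allI impI assms)

lemma herm_formD:
  assumes "herm_form bar n (k, h)"
  shows "\<And>x y. x \<in> carrier_mat k n \<Longrightarrow> y \<in> carrier_mat k n \<Longrightarrow> h x y \<in> carrier_mat n n"
    and "\<And>x y z. x \<in> carrier_mat k n \<Longrightarrow> y \<in> carrier_mat k n \<Longrightarrow> z \<in> carrier_mat k n \<Longrightarrow>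
      h (x + y) z = h x z + h y z"
    and "\<And>x y z. x \<in> carrier_mat k n \<Longrightarrow> y \<in> carrier_mat k n \<Longrightarrow> z \<in> carrier_mat k n \<Longrightarrow>
      h z (x + y) = h z x + h z y"
    and "\<And>x y a b. x \<in> carrier_mat k n \<Longrightarrow> y \<in> carrier_mat k n \<Longrightarrow> a \<in> carrier_mat n n \<Longrightarrow>
      b \<in> carrier_mat n n \<Longrightarrow> h (x * a) (y * b) = sigma bar a * h x y * b"
    and "\<And>x y. x \<in> carrier_mat k n \<Longrightarrow> y \<in> carrier_mat k n \<Longrightarrow> h y x = sigma bar (h x y)"
    and "\<And>g. A_linear n k g \<Longrightarrow> \<exists>!y. y \<in> carrier_mat k n \<and> (\<forall>x\<in>carrier_mat k n. g x = h y x)"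
proof -
  note H = assms[unfolded herm_form_def prod.case]
  show "\<And>x y. x \<in> carrier_mat k n \<Longrightarrow> y \<in> carrier_mat k n \<Longrightarrow> h x y \<in> carrier_mat n n"
    using H[THEN conjunct1] by blast
  show "\<And>x y z. x \<in> carrier_mat k n \<Longrightarrow> y \<in> carrier_mat k n \<Longrightarrow> z \<in> carrier_mat k n \<Longrightarrow>
      h (x + y) z = h x z + h y z"
    using H[THEN conjunct2, THEN conjunct1] by blast
  show "\<And>x y z. x \<in> carrier_mat k n \<Longrightarrow> y \<in> carrier_mat k n \<Longrightarrow> z \<in> carrier_mat k n \<Longrightarrow>
      h z (x + y) = h z x + h z y"
    using H[THEN conjunct2, THEN conjunct1] by blast
  show "\<And>x y a b. x \<in> carrier_mat k n \<Longrightarrow> y \<in> carrier_mat k n \<Longrightarrow> a \<in> carrier_mat n n \<Longrightarrow>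
      b \<in> carrier_mat n n \<Longrightarrow> h (x * a) (y * b) = sigma bar a * h x y * b"
    using H[THEN conjunct2, THEN conjunct2, THEN conjunct1] by blast
  show "\<And>x y. x \<in> carrier_mat k n \<Longrightarrow> y \<in> carrier_mat k n \<Longrightarrow> h y x = sigma bar (h x y)"
    using H[THEN conjunct2, THEN conjunct2, THEN conjunct2, THEN conjunct1] by blast
  show "\<And>g. A_linear n k g \<Longrightarrow> \<exists>!y. y \<in> carrier_mat k n \<and> (\<forall>x\<in>carrier_mat k n. g x = h y x)"
    using H[THEN conjunct2, THEN conjunct2, THEN conjunct2, THEN conjunct2] by blast
qed

locale hermitian_form = involution bar for bar :: "'d::division_ring \<Rightarrow> 'd" +
  fixes n k :: nat and h :: "'d mat \<Rightarrow> 'd mat \<Rightarrow> 'd mat"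
  assumes herm: "herm_form bar n (k, h)" and n_pos: "0 < n"
begin

abbreviation C :: "'d mat set" where "C \<equiv> carrier_mat k n"

lemma h_carrier: "x \<in> C \<Longrightarrow> y \<in> C \<Longrightarrow> h x y \<in> carrier_mat n n"
  by (rule herm_formD(1)[OF herm])

lemma h_add_left: "x \<in> C \<Longrightarrow> y \<in> C \<Longrightarrow> z \<in> C \<Longrightarrow> h (x + y) z = h x z + h y z"
  by (rule herm_formD(2)[OF herm])

lemma h_add_right: "x \<in> C \<Longrightarrow> y \<in> C \<Longrightarrow> z \<in> C \<Longrightarrow> h z (x + y) = h z x + h z y"
  by (rule herm_formD(3)[OF herm])

lemma h_sesquilinear: "x \<in> C \<Longrightarrow> y \<in> C \<Longrightarrow> a \<in> carrier_mat n n \<Longrightarrow> b \<in> carrier_mat n n \<Longrightarrow>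
    h (x * a) (y * b) = sigma bar a * h x y * b"
  by (rule herm_formD(4)[OF herm])

lemma h_hermitian: "x \<in> C \<Longrightarrow> y \<in> C \<Longrightarrow> h y x = sigma bar (h x y)"
  by (rule herm_formD(5)[OF herm])

lemma h_nonsingular: "A_linear n k g \<Longrightarrow> \<exists>!y. y \<in> C \<and> (\<forall>x\<in>C. g x = h y x)"
  by (rule herm_formD(6)[OF herm])

lemma h_represents_unique:
  assumes "A_linear n k g" "y \<in> C" "\<forall>x\<in>C. g x = h y x" "y' \<in> C" "\<forall>x\<in>C. g x = h y' x"
  shows "y = y'"
  using h_nonsingular[OF assms(1)] assms(2-5) by blast

lemma h_mult_right: "x \<in> C \<Longrightarrow> y \<in> C \<Longrightarrow> b \<in> carrier_mat n n \<Longrightarrow> h x (y * b) = h x y * b"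
  using h_sesquilinear[of x y "1\<^sub>m n" b] h_carrier[of x y] by simp

lemma h_mult_left: "x \<in> C \<Longrightarrow> y \<in> C \<Longrightarrow> a \<in> carrier_mat n n \<Longrightarrow> h (x * a) y = sigma bar a * h x y"
  using h_sesquilinear[of x y a "1\<^sub>m n"] h_carrier[of x y] by simp

lemma h_zero_right: "x \<in> C \<Longrightarrow> h x (0\<^sub>m k n) = 0\<^sub>m n n"
  using h_add_right[of "0\<^sub>m k n" "0\<^sub>m k n" x] by (intro mat_add_self_eq_zero h_carrier) auto

text \<open>Under the Morita correspondence a hermitian form over \<open>M\<^sub>n(D)\<close> on \<open>(D\<^sup>n)\<^sup>k\<close> is the same
  as a hermitian form over \<open>D\<close> on \<open>D\<^sup>k\<close>; this is the latter.\<close>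
definition vec_form :: "(nat \<Rightarrow> 'd) \<Rightarrow> (nat \<Rightarrow> 'd) \<Rightarrow> 'd" where
  "vec_form u v = h (col_mat k n u) (col_mat k n v) $$ (0,0)"

lemma vec_form_add_right: "vec_form u (\<lambda>r. v r + w r) = vec_form u v + vec_form u w"
  unfolding vec_form_def col_mat_add
  using h_add_right[of "col_mat k n v" "col_mat k n w" "col_mat k n u"]
    h_carrier[of "col_mat k n u" "col_mat k n w"] n_pos by simp

lemma vec_form_scale_right: "vec_form u (\<lambda>r. v r * d) = vec_form u v * d"
proof -
  let ?H = "h (col_mat k n u) (col_mat k n v)"
  have "h (col_mat k n u) (col_mat k n (\<lambda>r. v r * d)) = ?H * corner_mat n d"
    unfolding col_mat_scale[OF n_pos] by (rule h_mult_right) auto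
  moreover have "col_fun 0 (?H * corner_mat n d) 0 = col_fun 0 ?H 0 * d"
    using col_fun_mult_corner[OF h_carrier n_pos] by simp
  ultimately show ?thesis
    unfolding vec_form_def using h_carrier[of "col_mat k n u" "col_mat k n v"] n_pos
    by (simp add: col_fun_def)
qed

lemma vec_form_conj: "vec_form v u = bar (vec_form u v)"
  unfolding vec_form_def
  using h_hermitian[of "col_mat k n u" "col_mat k n v"] h_carrier[of "col_mat k n u" "col_mat k n v"] n_pos
  by simp

lemma vec_form_lin_comb_right:
  assumes "finite I" "\<forall>i\<in>I. is_vec k (W i)"
  shows "vec_form u (lin_comb I W c) = (\<Sum>i\<in>I. vec_form u (W i) * c i)"
proof -
  have "(\<lambda>r. vec_form u (lin_comb I W c)) = lin_comb I (\<lambda>i r. vec_form u (W i)) c"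
    by (rule linear_lin_comb[where \<psi> = "\<lambda>v r. vec_form u v"])
      (use assms in \<open>auto simp: vec_form_add_right vec_form_scale_right\<close>)
  from fun_cong[OF this, of 0] show ?thesis by (simp add: lin_comb_def)
qed

lemma vec_form_lin_comb_left:
  "finite I \<Longrightarrow> \<forall>i\<in>I. is_vec k (W i) \<Longrightarrow> vec_form (lin_comb I W c) v = (\<Sum>i\<in>I. bar (c i) * vec_form (W i) v)"
  by (simp add: vec_form_conj[of _ v] vec_form_lin_comb_right bar_sum bar_mult)

text \<open>Non-singularity of \<open>h\<close> over \<open>M\<^sub>n(D)\<close> gives non-singularity of the form on \<open>D\<^sup>k\<close>, applied to
  the \<open>M\<^sub>n(D)\<close>-linear map \<open>functional_row n \<phi>\<close>.\<close>
lemma vec_form_represents: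
  fixes \<phi> :: "(nat \<Rightarrow> 'd) \<Rightarrow> 'd"
  assumes add: "\<And>v w. is_vec k v \<Longrightarrow> is_vec k w \<Longrightarrow> \<phi> (\<lambda>r. v r + w r) = \<phi> v + \<phi> w"
    and scale: "\<And>v d. is_vec k v \<Longrightarrow> \<phi> (\<lambda>r. v r * d) = \<phi> v * d"
  obtains y where "is_vec k y" "\<And>u. is_vec k u \<Longrightarrow> vec_form y u = \<phi> u"
proof -
  let ?g = "functional_row n \<phi>"
  have "A_linear n k ?g" using add scale by (rule A_linear_functional_row)
  then obtain y0 where y0: "y0 \<in> C" "\<forall>x\<in>C. ?g x = h y0 x"
    using h_nonsingular by blast
  show ?thesis
  proof (rule that)
    show "is_vec k (col_fun 0 y0)" by (rule is_vec_col_fun[OF y0(1)])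
    fix u :: "nat \<Rightarrow> 'd" assume u: "is_vec k u"
    have "h (col_mat k n (col_fun 0 y0)) (col_mat k n u) = matrix_unit n 0 0 * h y0 (col_mat k n u)"
      using mult_matrix_unit_col[OF y0(1) n_pos, symmetric]
        h_mult_left[OF y0(1) col_mat_carrier matrix_unit_carrier] by simp
    then have "vec_form (col_fun 0 y0) u = ?g (col_mat k n u) $$ (0,0)"
      unfolding vec_form_def using y0 index_matrix_unit_mult_00[OF h_carrier n_pos] by simp
    then show "vec_form (col_fun 0 y0) u = \<phi> u"
      using n_pos col_fun_col_mat[OF u n_pos] by (simp add: functional_row_def)
  qed
qed

end

section \<open>Metabolic forms have even rank\<close>

locale lagrangian = hermitian_form bar n k h for bar :: "'d::division_ring \<Rightarrow> 'd" and n k h +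
  fixes L :: "'d mat set"
  assumes L_submodule: "submodule n k L"
    and L_perp: "L = {y \<in> carrier_mat k n. \<forall>x\<in>L. h x y = 0\<^sub>m n n}"
begin

definition lag_vecs :: "(nat \<Rightarrow> 'd) set" where
  "lag_vecs = {v. is_vec k v \<and> col_mat k n v \<in> L}"

lemma L_subset: "L \<subseteq> C"
  and L_add: "x \<in> L \<Longrightarrow> y \<in> L \<Longrightarrow> x + y \<in> L"
  and L_mult: "x \<in> L \<Longrightarrow> a \<in> carrier_mat n n \<Longrightarrow> x * a \<in> L"
  and L_zero: "0\<^sub>m k n \<in> L"
  using L_submodule unfolding submodule_def by auto

lemma mem_L_iff: "y \<in> L \<longleftrightarrow> y \<in> C \<and> (\<forall>x\<in>L. h x y = 0\<^sub>m n n)"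
proof -
  have "y \<in> L \<longleftrightarrow> y \<in> {y \<in> C. \<forall>x\<in>L. h x y = 0\<^sub>m n n}"
    by (rule eqset_imp_iff[OF L_perp])
  then show ?thesis by simp
qed

lemma L_orthogonal: "x \<in> L \<Longrightarrow> y \<in> L \<Longrightarrow> h x y = 0\<^sub>m n n"
  using mem_L_iff[of y] by simp

lemma lin_comb_mem_lag_vecs: "finite I \<Longrightarrow> \<forall>i\<in>I. W i \<in> lag_vecs \<Longrightarrow> lin_comb I W c \<in> lag_vecs"
proof (induction I rule: finite_induct)
  case empty
  then show ?case by (simp add: lag_vecs_def is_vec_def col_mat_zero L_zero)
next
  case (insert i I)
  then have "lin_comb I W c \<in> lag_vecs" "W i \<in> lag_vecs" by auto
  then have "col_mat k n (\<lambda>r. lin_comb I W c r + W i r * c i) \<in> L"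
    unfolding col_mat_add col_mat_scale[OF n_pos] lag_vecs_def by (auto intro!: L_add L_mult)
  moreover have "is_vec k (\<lambda>r. lin_comb I W c r + W i r * c i)"
    using \<open>lin_comb I W c \<in> lag_vecs\<close> \<open>W i \<in> lag_vecs\<close> by (auto simp: lag_vecs_def is_vec_def)
  ultimately show ?case using insert by (simp add: lin_comb_insert lag_vecs_def)
qed

lemma vec_form_lag_vecs:
  assumes "v \<in> lag_vecs" "w \<in> lag_vecs"
  shows "vec_form v w = 0"
proof -
  have "h (col_mat k n v) (col_mat k n w) = 0\<^sub>m n n"
    using assms L_orthogonal unfolding lag_vecs_def by simp
  then show ?thesis by (simp add: vec_form_def n_pos)
qed

text \<open>The \<open>(i,0)\<close> entry of \<open>h x (col_mat w)\<close> is the value of \<open>vec_form\<close> on \<open>w\<close> and the \<open>i\<close>-th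
  column of \<open>x\<close>, which lies in \<open>lag_vecs\<close> if \<open>x \<in> L\<close>.\<close>
lemma mem_lag_vecs_if_orthogonal:
  assumes w: "is_vec k w" and orth: "\<forall>v\<in>lag_vecs. vec_form v w = 0"
  shows "w \<in> lag_vecs"
proof -
  let ?w = "col_mat k n w"
  have w_unit: "?w * matrix_unit n 0 0 = ?w"
    by (simp add: mult_matrix_unit_col[OF col_mat_carrier n_pos] col_mat_col_fun_self)
  have "h x ?w = 0\<^sub>m n n" if x: "x \<in> L" for x
  proof (rule eq_matI)
    have xC: "x \<in> C" using x L_subset by auto
    fix i j assume "i < dim_row (0\<^sub>m n n :: 'd mat)" "j < dim_col (0\<^sub>m n n :: 'd mat)"
    then have ij: "i < n" "j < n" by auto
    have "h x ?w = h x (?w * matrix_unit n 0 0)" using w_unit by simp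
    also have "\<dots> = h x ?w * matrix_unit n 0 0"
      by (rule h_mult_right[OF xC col_mat_carrier matrix_unit_carrier])
    finally have "h x ?w $$ (i,j) = (h x ?w * matrix_unit n 0 0) $$ (i,j)"
      by (rule arg_cong)
    also have "\<dots> = (if j = 0 then h x ?w $$ (i,0) else 0)"
      by (rule index_mult_matrix_unit_00[OF h_carrier[OF xC col_mat_carrier] ij])
    finally have first_col: "h x ?w $$ (i,j) = (if j = 0 then h x ?w $$ (i,0) else 0)" .
    have x_col: "x * matrix_unit n i 0 = col_mat k n (col_fun i x)"
      by (rule mult_matrix_unit_col[OF xC ij(1)])
    then have "col_fun i x \<in> lag_vecs"
      unfolding lag_vecs_def using is_vec_col_fun[OF xC] L_mult[OF x matrix_unit_carrier, of i 0] by auto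
    then have "h (x * matrix_unit n i 0) ?w $$ (0,0) = 0"
      using orth x_col by (simp add: vec_form_def)
    moreover have "h (x * matrix_unit n i 0) ?w = matrix_unit n 0 i * h x ?w"
      using h_mult_left[OF xC col_mat_carrier matrix_unit_carrier] by simp
    ultimately have "h x ?w $$ (i,0) = 0"
      using index_matrix_unit_mult_00[OF h_carrier[OF xC col_mat_carrier] ij(1)] by simp
    then show "h x ?w $$ (i,j) = 0\<^sub>m n n $$ (i,j)" using first_col ij by simp
  qed (use h_carrier[OF subsetD[OF L_subset x] col_mat_carrier] in auto)
  then have "?w \<in> L" using mem_L_iff[of ?w] by simp
  then show ?thesis using w by (simp add: lag_vecs_def)
qed

end

locale lagrangian_basis = lagrangian bar n k h L + vec_basis k "m + r" W
  for bar :: "'d::division_ring \<Rightarrow> 'd" and n k h L m r and W :: "nat \<Rightarrow> nat \<Rightarrow> 'd" +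
  assumes lag_basis_mem: "\<And>i. i < m \<Longrightarrow> W i \<in> lag_vecs"
    and lag_basis_spans: "\<And>v. v \<in> lag_vecs \<Longrightarrow> \<exists>c. v = lin_comb {..<m} W c"
begin

text \<open>The complement injects into the dual of the Lagrangian, since \<open>lag_vecs\<close> is its own
  orthogonal.\<close>
lemma complement_le: "r \<le> m"
proof -
  define G where "G s = (\<lambda>j. if j < m then vec_form (W j) (W (m + s)) else 0)" for s
  have compl_vec: "\<forall>s\<in>{..<r}. is_vec k (W (m + s))" using basis_is_vec by simp
  have "lin_indep {..<r} G"
    unfolding lin_indep_def
  proof (intro allI impI)
    fix c assume c: "lin_comb {..<r} G c = (\<lambda>r. 0)"
    define z where "z = lin_comb {..<r} (\<lambda>s. W (m + s)) c"
    have orth: "vec_form (W j) z = 0" if "j < m" for j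
      using fun_cong[OF c, of j] that vec_form_lin_comb_right[OF _ compl_vec]
      by (simp add: z_def lin_comb_def G_def)
    have "vec_form v z = 0" if v: "v \<in> lag_vecs" for v
    proof -
      obtain d where "v = lin_comb {..<m} W d" using lag_basis_spans[OF v] by blast
      then have "vec_form v z = (\<Sum>i<m. bar (d i) * vec_form (W i) z)"
        using vec_form_lin_comb_left[of "{..<m}" W d z] basis_is_vec by simp
      also have "\<dots> = 0" using orth by (intro sum.neutral) simp
      finally show ?thesis .
    qed
    then have "z \<in> lag_vecs"
      using mem_lag_vecs_if_orthogonal is_vec_lin_comb[OF compl_vec] by (auto simp: z_def)
    then obtain d where d: "z = lin_comb {..<m} W d" using lag_basis_spans by blast
    define c' where "c' i = (if i < m then d i else - c (i - m))" for i
    have "lin_comb {..<m} W c' = lin_comb {..<m} W d"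
      by (rule lin_comb_cong) (auto simp: c'_def)
    moreover have "lin_comb {..<r} (\<lambda>s. W (m + s)) (\<lambda>s. c' (m + s)) = (\<lambda>x. - z x)"
      by (simp add: z_def lin_comb_def c'_def sum_negf fun_eq_iff)
    ultimately have "lin_comb {..<m + r} W c' = (\<lambda>x. 0)"
      unfolding lin_comb_add_interval using d by simp
    then have "\<forall>i\<in>{..<m + r}. c' i = 0" using basis_indep unfolding lin_indep_def by blast
    then have "c' (m + s) = 0" if "s < r" for s using that by simp
    then show "\<forall>s\<in>{..<r}. c s = 0" by (simp add: c'_def)
  qed
  moreover have "\<forall>s\<in>{..<r}. is_vec m (G s)" by (simp add: G_def is_vec_def)
  ultimately show ?thesis using card_le_of_lin_indep[of "{..<r}" m G] by simp
qed

lemma mem_lag_vecs_if_coord_zero: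
  assumes "is_vec k z" "\<And>s. s < r \<Longrightarrow> coord z (m + s) = 0"
  shows "z \<in> lag_vecs"
proof -
  have "z = lin_comb {..<m + r} W (coord z)" by (rule lin_comb_coord[OF assms(1)])
  also have "\<dots> = lin_comb {..<m} W (coord z)"
    unfolding lin_comb_add_interval using assms(2) by (simp add: lin_comb_def)
  finally have "z = lin_comb {..<m} W (coord z)" .
  moreover have "lin_comb {..<m} W (coord z) \<in> lag_vecs"
    using lag_basis_mem by (intro lin_comb_mem_lag_vecs) auto
  ultimately show ?thesis by simp
qed

text \<open>The coordinate functionals of the Lagrangian basis are represented by vectors \<open>Y\<^sub>p\<close>
  (non-singularity); their components along the complement are independent.\<close>
lemma lagrangian_le: "m \<le> r"
proof -
  have "\<exists>y. is_vec k y \<and> (\<forall>u. is_vec k u \<longrightarrow> vec_form y u = coord u p)" if p: "p < m" for p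
  proof -
    obtain y where "is_vec k y" "\<And>u. is_vec k u \<Longrightarrow> vec_form y u = coord u p"
      by (rule vec_form_represents[of "\<lambda>u. coord u p"]) (use p in \<open>simp_all add: coord_add coord_scale\<close>)
    then show ?thesis by blast
  qed
  then obtain Y where Y: "\<And>p. p < m \<Longrightarrow> is_vec k (Y p)"
    "\<And>p u. p < m \<Longrightarrow> is_vec k u \<Longrightarrow> vec_form (Y p) u = coord u p"
    by metis
  have dual: "vec_form (W j) (Y p) = basis_vec j p" if "j < m" "p < m" for j p
  proof -
    have "vec_form (Y p) (W j) = basis_vec j p"
      using Y(2)[OF that(2) basis_is_vec] coord_basis that by simp
    then show ?thesis using vec_form_conj[of "W j" "Y p"] by (simp add: basis_vec_def)
  qed
  define H where "H p = (\<lambda>s. if s < r then coord (Y p) (m + s) else 0)" for p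
  have "lin_indep {..<m} H"
    unfolding lin_indep_def
  proof (intro allI impI ballI)
    fix d j assume d: "lin_comb {..<m} H d = (\<lambda>r. 0)" and j: "j \<in> {..<m}"
    have Y_vec: "\<forall>p\<in>{..<m}. is_vec k (Y p)" using Y(1) by simp
    define z where "z = lin_comb {..<m} Y d"
    have "coord z (m + s) = 0" if "s < r" for s
      using fun_cong[OF d, of s] that coord_lin_comb[OF _ Y_vec, of "m + s" d]
      by (simp add: z_def lin_comb_def H_def)
    then have "z \<in> lag_vecs"
      using mem_lag_vecs_if_coord_zero is_vec_lin_comb[OF Y_vec] by (simp add: z_def)
    then have "0 = vec_form (W j) z" using vec_form_lag_vecs lag_basis_mem j by simp
    also have "\<dots> = (\<Sum>p<m. basis_vec j p * d p)"
      unfolding z_def using vec_form_lin_comb_right[OF _ Y_vec] dual j by simp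
    also have "\<dots> = d j"
      using j by (subst sum_lessThan_single[of j]) (auto simp: basis_vec_def)
    finally show "d j = 0" by simp
  qed
  moreover have "\<forall>p\<in>{..<m}. is_vec r (H p)" by (simp add: H_def is_vec_def)
  ultimately show ?thesis using card_le_of_lin_indep[of "{..<m}" r H] by simp
qed

end

context lagrangian
begin

theorem even_rank: "even k"
proof -
  obtain m W0 where W0: "\<forall>i<m. W0 i \<in> lag_vecs" "lin_indep {..<m} W0"
      "\<forall>v\<in>lag_vecs. \<exists>c. v = lin_comb {..<m} W0 c"
    using exists_spanning_extension[of lag_vecs k 0 "\<lambda>_ _. 0"] by (auto simp: lag_vecs_def lin_indep_def)
  have "\<forall>i<m. W0 i \<in> {v. is_vec k v}" using W0(1) by (simp add: lag_vecs_def)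
  then obtain r W where W: "\<forall>i<m. W i = W0 i" "\<forall>i<m + r. W i \<in> {v. is_vec k v}"
      "lin_indep {..<m + r} W" "\<forall>v\<in>{v. is_vec k v}. \<exists>c. v = lin_comb {..<m + r} W c"
    using exists_spanning_extension[of "{v. is_vec k v}" k m W0] W0(2) by auto
  interpret lagrangian_basis bar n k h L m r W
  proof
    show "is_vec k (W i)" if "i < m + r" for i using W(2) that by simp
    show "lin_indep {..<m + r} W" by (rule W(3))
    show "\<exists>c. v = lin_comb {..<m + r} W c" if "is_vec k v" for v using W(4) that by simp
    show "W i \<in> lag_vecs" if "i < m" for i using W(1) W0(1) that by simp
    fix v assume "v \<in> lag_vecs"
    then obtain c where "v = lin_comb {..<m} W0 c" using W0(3) by blast
    moreover have "lin_comb {..<m} W0 c = lin_comb {..<m} W c"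
      using W(1) by (intro lin_comb_cong) auto
    ultimately show "\<exists>c. v = lin_comb {..<m} W c" by auto
  qed
  have "k = m + r" using card_eq by simp
  then show ?thesis using complement_le lagrangian_le by presburger
qed

end

section \<open>Rank-one forms and orthogonal sums\<close>

lemma A_linear_row_space:
  fixes g :: "'d::division_ring mat \<Rightarrow> 'd mat"
  assumes g: "A_linear n 1 g"
  obtains w where "\<And>x i j. x \<in> carrier_mat 1 n \<Longrightarrow> i < n \<Longrightarrow> j < n \<Longrightarrow> g x $$ (i,j) = w i * x $$ (0,j)"
proof -
  define e :: "'d mat" where "e = mat 1 n (\<lambda>(i,j). if j = 0 then 1 else 0)"
  have e: "e \<in> carrier_mat 1 n" by (simp add: e_def)
  show thesis
  proof (rule that)
    fix x :: "'d mat" and i j assume x: "x \<in> carrier_mat 1 n" and ij: "i < n" "j < n"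
    define X where "X = mat n n (\<lambda>(i,j). if i = 0 then x $$ (0,j) else 0)"
    have X: "X \<in> carrier_mat n n" by (simp add: X_def)
    have "e * X = x"
    proof (rule eq_matI)
      fix i' j' assume "i' < dim_row x" "j' < dim_col x"
      then have ij': "i' = 0" "j' < n" using x by auto
      have "(e * X) $$ (i',j') = (\<Sum>l<n. e $$ (i',l) * X $$ (l,j'))"
        using ij' e X by (intro index_mult_mat_sum) auto
      also have "\<dots> = e $$ (i',0) * X $$ (0,j')"
        using ij' by (intro sum_lessThan_single) (auto simp: e_def X_def)
      finally show "(e * X) $$ (i',j') = x $$ (i',j')" using ij' by (simp add: e_def X_def)
    qed (use x in \<open>auto simp: e_def X_def\<close>)
    then have "g x = g e * X" using g e X unfolding A_linear_def by metis
    then have "g x $$ (i,j) = (\<Sum>l<n. g e $$ (i,l) * X $$ (l,j))"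
      using g e X ij index_mult_mat_sum[of "g e" n n X n i j] unfolding A_linear_def by simp
    also have "\<dots> = g e $$ (i,0) * X $$ (0,j)"
      using ij by (intro sum_lessThan_single) (auto simp: X_def)
    finally show "g x $$ (i,j) = g e $$ (i,0) * x $$ (0,j)" using ij by (simp add: X_def)
  qed
qed

definition stack :: "nat \<Rightarrow> nat \<Rightarrow> nat \<Rightarrow> 'd mat \<Rightarrow> 'd mat \<Rightarrow> 'd mat" where
  "stack k1 k2 n x1 x2 = mat (k1 + k2) n (\<lambda>(i,j). if i < k1 then x1 $$ (i,j) else x2 $$ (i - k1, j))"

lemma top_rows_carrier [simp]: "top_rows k1 n x \<in> carrier_mat k1 n"
  and bottom_rows_carrier [simp]: "bottom_rows k1 k2 n x \<in> carrier_mat k2 n"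
  and stack_carrier [simp]: "stack k1 k2 n x1 x2 \<in> carrier_mat (k1 + k2) n"
  by (simp_all add: top_rows_def bottom_rows_def stack_def)

lemma top_rows_add: "x \<in> carrier_mat (k1 + k2) n \<Longrightarrow> y \<in> carrier_mat (k1 + k2) n \<Longrightarrow>
    top_rows k1 n (x + y) = top_rows k1 n x + top_rows k1 n y"
  and bottom_rows_add: "x \<in> carrier_mat (k1 + k2) n \<Longrightarrow> y \<in> carrier_mat (k1 + k2) n \<Longrightarrow>
    bottom_rows k1 k2 n (x + y) = bottom_rows k1 k2 n x + bottom_rows k1 k2 n y"
  by (rule eq_matI; auto simp: top_rows_def bottom_rows_def)+

lemma top_rows_mult:
  fixes x :: "'d::semiring_0 mat"
  assumes x: "x \<in> carrier_mat (k1 + k2) n" and a: "a \<in> carrier_mat n n"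
  shows "top_rows k1 n (x * a) = top_rows k1 n x * a"
proof (rule eq_matI)
  fix i j assume "i < dim_row (top_rows k1 n x * a)" "j < dim_col (top_rows k1 n x * a)"
  then have ij: "i < k1" "j < n" using a by (auto simp: top_rows_def)
  have "(top_rows k1 n x * a) $$ (i,j) = (\<Sum>l<n. x $$ (i,l) * a $$ (l,j))"
    using ij index_mult_mat_sum[OF top_rows_carrier a ij] by (simp add: top_rows_def)
  also have "\<dots> = (x * a) $$ (i,j)" using index_mult_mat_sum[OF x a, of i j] ij by simp
  finally show "top_rows k1 n (x * a) $$ (i,j) = (top_rows k1 n x * a) $$ (i,j)"
    using ij by (simp add: top_rows_def)
qed (use a in \<open>auto simp: top_rows_def\<close>)

lemma bottom_rows_mult:
  fixes x :: "'d::semiring_0 mat"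
  assumes x: "x \<in> carrier_mat (k1 + k2) n" and a: "a \<in> carrier_mat n n"
  shows "bottom_rows k1 k2 n (x * a) = bottom_rows k1 k2 n x * a"
proof (rule eq_matI)
  fix i j assume "i < dim_row (bottom_rows k1 k2 n x * a)" "j < dim_col (bottom_rows k1 k2 n x * a)"
  then have ij: "i < k2" "j < n" using a by (auto simp: bottom_rows_def)
  have "(bottom_rows k1 k2 n x * a) $$ (i,j) = (\<Sum>l<n. x $$ (i + k1,l) * a $$ (l,j))"
    using ij index_mult_mat_sum[OF bottom_rows_carrier a ij] by (simp add: bottom_rows_def)
  also have "\<dots> = (x * a) $$ (i + k1,j)" using index_mult_mat_sum[OF x a, of "i + k1" j] ij by simp
  finally show "bottom_rows k1 k2 n (x * a) $$ (i,j) = (bottom_rows k1 k2 n x * a) $$ (i,j)"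
    using ij by (simp add: bottom_rows_def)
qed (use a in \<open>auto simp: bottom_rows_def\<close>)

lemma top_rows_stack: "x1 \<in> carrier_mat k1 n \<Longrightarrow> top_rows k1 n (stack k1 k2 n x1 x2) = x1"
  and bottom_rows_stack: "x2 \<in> carrier_mat k2 n \<Longrightarrow> bottom_rows k1 k2 n (stack k1 k2 n x1 x2) = x2"
  and stack_top_bottom: "x \<in> carrier_mat (k1 + k2) n \<Longrightarrow>
    stack k1 k2 n (top_rows k1 n x) (bottom_rows k1 k2 n x) = x"
  by (rule eq_matI; auto simp: top_rows_def bottom_rows_def stack_def)+

lemma stack_add: "x1 \<in> carrier_mat k1 n \<Longrightarrow> y1 \<in> carrier_mat k1 n \<Longrightarrow>
    x2 \<in> carrier_mat k2 n \<Longrightarrow> y2 \<in> carrier_mat k2 n \<Longrightarrow>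
    stack k1 k2 n (x1 + y1) (x2 + y2) = stack k1 k2 n x1 x2 + stack k1 k2 n y1 y2"
  by (rule eq_matI) (auto simp: stack_def)

lemma stack_mult:
  fixes x1 :: "'d::semiring_0 mat"
  assumes "x1 \<in> carrier_mat k1 n" "x2 \<in> carrier_mat k2 n" "a \<in> carrier_mat n n"
  shows "stack k1 k2 n x1 x2 * a = stack k1 k2 n (x1 * a) (x2 * a)"
proof -
  let ?x = "stack k1 k2 n x1 x2 * a"
  have "?x = stack k1 k2 n (top_rows k1 n ?x) (bottom_rows k1 k2 n ?x)"
    by (rule stack_top_bottom[symmetric]) (use assms(3) in \<open>intro mult_carrier_mat; simp\<close>)
  then show ?thesis
    using assms top_rows_mult[OF stack_carrier assms(3), of k1 k2 x1 x2]
      bottom_rows_mult[OF stack_carrier assms(3), of k1 k2 x1 x2]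
    by (simp add: top_rows_stack bottom_rows_stack)
qed

lemma A_linear_stack_top:
  assumes "A_linear n (k1 + k2) g"
  shows "A_linear n k1 (\<lambda>x. g (stack k1 k2 n x (0\<^sub>m k2 n)))"
proof -
  have add: "x \<in> carrier_mat (k1 + k2) n \<Longrightarrow> y \<in> carrier_mat (k1 + k2) n \<Longrightarrow> g (x + y) = g x + g y"
    and mult: "x \<in> carrier_mat (k1 + k2) n \<Longrightarrow> a \<in> carrier_mat n n \<Longrightarrow> g (x * a) = g x * a"
    and car: "x \<in> carrier_mat (k1 + k2) n \<Longrightarrow> g x \<in> carrier_mat n n" for x y a
    using assms unfolding A_linear_def by blast+
  show ?thesis
    unfolding A_linear_def
  proof (intro conjI ballI)
    fix x y :: "'a mat" assume "x \<in> carrier_mat k1 n" "y \<in> carrier_mat k1 n"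
    then have "stack k1 k2 n (x + y) (0\<^sub>m k2 n) = stack k1 k2 n x (0\<^sub>m k2 n) + stack k1 k2 n y (0\<^sub>m k2 n)"
      using stack_add[of x k1 n y "0\<^sub>m k2 n" k2 "0\<^sub>m k2 n"] by simp
    then show "g (stack k1 k2 n (x + y) (0\<^sub>m k2 n)) =
        g (stack k1 k2 n x (0\<^sub>m k2 n)) + g (stack k1 k2 n y (0\<^sub>m k2 n))"
      using add by simp
  next
    fix x a :: "'a mat" assume "x \<in> carrier_mat k1 n" "a \<in> carrier_mat n n"
    then have "stack k1 k2 n x (0\<^sub>m k2 n) * a = stack k1 k2 n (x * a) (0\<^sub>m k2 n)"
      using stack_mult[of x k1 n "0\<^sub>m k2 n" k2 a] by simp
    then show "g (stack k1 k2 n (x * a) (0\<^sub>m k2 n)) = g (stack k1 k2 n x (0\<^sub>m k2 n)) * a"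
      using mult \<open>a \<in> carrier_mat n n\<close> by (metis stack_carrier)
  qed (simp add: car)
qed

lemma A_linear_stack_bottom:
  assumes "A_linear n (k1 + k2) g"
  shows "A_linear n k2 (\<lambda>x. g (stack k1 k2 n (0\<^sub>m k1 n) x))"
proof -
  have add: "x \<in> carrier_mat (k1 + k2) n \<Longrightarrow> y \<in> carrier_mat (k1 + k2) n \<Longrightarrow> g (x + y) = g x + g y"
    and mult: "x \<in> carrier_mat (k1 + k2) n \<Longrightarrow> a \<in> carrier_mat n n \<Longrightarrow> g (x * a) = g x * a"
    and car: "x \<in> carrier_mat (k1 + k2) n \<Longrightarrow> g x \<in> carrier_mat n n" for x y a
    using assms unfolding A_linear_def by blast+
  show ?thesis
    unfolding A_linear_def
  proof (intro conjI ballI)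
    fix x y :: "'a mat" assume "x \<in> carrier_mat k2 n" "y \<in> carrier_mat k2 n"
    then have "stack k1 k2 n (0\<^sub>m k1 n) (x + y) = stack k1 k2 n (0\<^sub>m k1 n) x + stack k1 k2 n (0\<^sub>m k1 n) y"
      using stack_add[of "0\<^sub>m k1 n" k1 n "0\<^sub>m k1 n" x k2 y] by simp
    then show "g (stack k1 k2 n (0\<^sub>m k1 n) (x + y)) =
        g (stack k1 k2 n (0\<^sub>m k1 n) x) + g (stack k1 k2 n (0\<^sub>m k1 n) y)"
      using add by simp
  next
    fix x a :: "'a mat" assume "x \<in> carrier_mat k2 n" "a \<in> carrier_mat n n"
    then have "stack k1 k2 n (0\<^sub>m k1 n) x * a = stack k1 k2 n (0\<^sub>m k1 n) (x * a)"
      using stack_mult[of "0\<^sub>m k1 n" k1 n x k2 a] by simp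
    then show "g (stack k1 k2 n (0\<^sub>m k1 n) (x * a)) = g (stack k1 k2 n (0\<^sub>m k1 n) x) * a"
      using mult \<open>a \<in> carrier_mat n n\<close> by (metis stack_carrier)
  qed (simp add: car)
qed

definition h_pairing :: "('d::division_ring \<Rightarrow> 'd) \<Rightarrow> nat \<Rightarrow> 'd \<Rightarrow> 'd mat \<Rightarrow> 'd mat \<Rightarrow> 'd mat" where
  "h_pairing bar n c x y = mat n n (\<lambda>(i,j). bar (x $$ (0, i)) * c * y $$ (0, j))"

lemma h_form_eq: "h_form bar n c = (1, h_pairing bar n c)"
  by (simp add: h_form_def h_pairing_def[abs_def])

lemma h_pairing_carrier [simp]: "h_pairing bar n c x y \<in> carrier_mat n n"
  and h_pairing_dim [simp]: "dim_row (h_pairing bar n c x y) = n" "dim_col (h_pairing bar n c x y) = n"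
  by (simp_all add: h_pairing_def)

lemma index_h_pairing: "i < n \<Longrightarrow> j < n \<Longrightarrow> h_pairing bar n c x y $$ (i,j) = bar (x $$ (0,i)) * c * y $$ (0,j)"
  by (simp add: h_pairing_def)

context involution
begin

lemma h_pairing_sesquilinear:
  assumes x: "x \<in> carrier_mat 1 n" and y: "y \<in> carrier_mat 1 n"
    and a: "a \<in> carrier_mat n n" and b: "b \<in> carrier_mat n n"
  shows "h_pairing bar n c (x * a) (y * b) = sigma bar a * h_pairing bar n c x y * b"
proof (rule eq_matI)
  fix i j assume "i < dim_row (sigma bar a * h_pairing bar n c x y * b)"
    "j < dim_col (sigma bar a * h_pairing bar n c x y * b)"
  then have ij: "i < n" "j < n" using a b by auto
  have "h_pairing bar n c (x * a) (y * b) $$ (i,j) =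
      bar (\<Sum>l<n. x $$ (0,l) * a $$ (l,i)) * c * (\<Sum>m<n. y $$ (0,m) * b $$ (m,j))"
    using ij index_mult_mat_sum[OF x a _ ij(1)] index_mult_mat_sum[OF y b _ ij(2)] by (simp add: index_h_pairing)
  also have "\<dots> = (\<Sum>m<n. \<Sum>l<n. bar (a $$ (l,i)) * (bar (x $$ (0,l)) * c * y $$ (0,m)) * b $$ (m,j))"
    by (simp add: bar_sum bar_mult sum_distrib_left sum_distrib_right mult.assoc)
  also have "\<dots> = (\<Sum>m<n. (\<Sum>l<n. sigma bar a $$ (i,l) * h_pairing bar n c x y $$ (l,m)) * b $$ (m,j))"
    using ij a by (intro sum.cong refl) (auto simp: sum_distrib_right index_h_pairing)
  also have "\<dots> = (sigma bar a * h_pairing bar n c x y * b) $$ (i,j)"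
    using index_mult_mat_sum[OF mult_carrier_mat[OF sigma_carrier[OF a]] b ij]
      index_mult_mat_sum[OF sigma_carrier[OF a] _ ij(1)] by simp
  finally show "h_pairing bar n c (x * a) (y * b) $$ (i,j) =
      (sigma bar a * h_pairing bar n c x y * b) $$ (i,j)" .
qed (use a b in auto)

text \<open>An \<open>M\<^sub>n(D)\<close>-linear map on \<open>D\<^sup>n\<close> is left multiplication by a column \<open>w\<close>, and
  \<open>h_pairing bar n c y\<close> is left multiplication by the column \<open>(bar y) c\<close>.\<close>
lemma h_pairing_nonsingular:
  assumes c: "c \<noteq> 0" and n: "0 < n" and g: "A_linear n 1 g"
  shows "\<exists>!y. y \<in> carrier_mat 1 n \<and> (\<forall>x\<in>carrier_mat 1 n. g x = h_pairing bar n c y x)"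
proof -
  obtain w where w: "\<And>x i j. x \<in> carrier_mat 1 n \<Longrightarrow> i < n \<Longrightarrow> j < n \<Longrightarrow> g x $$ (i,j) = w i * x $$ (0,j)"
    using A_linear_row_space[OF g] by blast
  have g_dim: "x \<in> carrier_mat 1 n \<Longrightarrow> g x \<in> carrier_mat n n" for x
    using g by (simp add: A_linear_def)
  define y where "y = mat 1 n (\<lambda>(_,j). bar (w j * inverse c))"
  show ?thesis
  proof (rule ex1I)
    have "g x = h_pairing bar n c y x" if "x \<in> carrier_mat 1 n" for x
      using g_dim[OF that] c that by (intro eq_matI) (auto simp: y_def index_h_pairing w bar_bar mult.assoc)
    then show "y \<in> carrier_mat 1 n \<and> (\<forall>x\<in>carrier_mat 1 n. g x = h_pairing bar n c y x)"
      by (simp add: y_def)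
  next
    fix y' assume y': "y' \<in> carrier_mat 1 n \<and> (\<forall>x\<in>carrier_mat 1 n. g x = h_pairing bar n c y' x)"
    show "y' = y"
    proof (rule eq_matI)
      fix i j assume "i < dim_row y" "j < dim_col y"
      then have ij: "i = 0" "j < n" by (auto simp: y_def)
      let ?e = "mat 1 n (\<lambda>(i,j). if j = 0 then (1::'d) else 0)"
      have "w j = h_pairing bar n c y' ?e $$ (j,0)" using w[of ?e j 0] y' ij n by simp
      also have "\<dots> = bar (y' $$ (0,j)) * c" using ij n by (simp add: index_h_pairing)
      finally have "bar (w j * inverse c) = y' $$ (0,j)"
        using c bar_bar[of "y' $$ (0,j)"] by (simp add: mult.assoc)
      then show "y' $$ (i,j) = y $$ (i,j)" using ij by (simp add: y_def)
    qed (use y' in \<open>auto simp: y_def\<close>)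
  qed
qed

lemma herm_form_h_form:
  assumes c: "bar c = c" "c \<noteq> 0" and n: "0 < n"
  shows "herm_form bar n (h_form bar n c)"
  unfolding h_form_eq
proof (rule herm_formI)
  show "h_pairing bar n c (x + y) z = h_pairing bar n c x z + h_pairing bar n c y z"
    "h_pairing bar n c z (x + y) = h_pairing bar n c z x + h_pairing bar n c z y"
    if "x \<in> carrier_mat 1 n" "y \<in> carrier_mat 1 n" "z \<in> carrier_mat 1 n" for x y z
    using that by (auto simp: index_h_pairing bar_add distrib_left distrib_right intro!: eq_matI)
  show "h_pairing bar n c y x = sigma bar (h_pairing bar n c x y)" for x y
    by (rule eq_matI) (auto simp: index_h_pairing bar_mult bar_bar c mult.assoc)
  show "\<exists>!y. y \<in> carrier_mat 1 n \<and> (\<forall>x\<in>carrier_mat 1 n. g x = h_pairing bar n c y x)"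
    if "A_linear n 1 g" for g
    by (rule h_pairing_nonsingular[OF c(2) n that])
qed (simp_all add: h_pairing_sesquilinear)

end

lemma add_mat_swap_middle:
  fixes A :: "'d::comm_monoid_add mat"
  assumes "A \<in> carrier_mat m n" "B \<in> carrier_mat m n" "C \<in> carrier_mat m n" "D \<in> carrier_mat m n"
  shows "(A + B) + (C + D) = (A + C) + (B + D)"
  using assms by (intro eq_matI) (auto simp: ac_simps)

lemma mult_add_mult_distrib_mat:
  fixes S :: "'d::semiring_0 mat"
  assumes "S \<in> carrier_mat n n" "P \<in> carrier_mat n n" "Q \<in> carrier_mat n n" "B \<in> carrier_mat n n"
  shows "S * P * B + S * Q * B = S * (P + Q) * B"
  using assms by (simp add: mult_add_distrib_mat[of S n n] add_mult_distrib_mat[of _ n n])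

locale hermitian_pair = A: hermitian_form bar n k1 h1 + B: hermitian_form bar n k2 h2
  for bar :: "'d::division_ring \<Rightarrow> 'd" and n k1 h1 k2 h2
begin

definition hsum :: "'d mat \<Rightarrow> 'd mat \<Rightarrow> 'd mat" where
  "hsum x y = h1 (top_rows k1 n x) (top_rows k1 n y) + h2 (bottom_rows k1 k2 n x) (bottom_rows k1 k2 n y)"

lemma osum_eq: "osum n (k1, h1) (k2, h2) = (k1 + k2, hsum)"
  by (simp add: osum_def hsum_def[abs_def])

lemma hsum_stack: "x1 \<in> carrier_mat k1 n \<Longrightarrow> x2 \<in> carrier_mat k2 n \<Longrightarrow>
    hsum y (stack k1 k2 n x1 x2) = h1 (top_rows k1 n y) x1 + h2 (bottom_rows k1 k2 n y) x2"
  by (simp add: hsum_def top_rows_stack bottom_rows_stack)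

text \<open>A functional on the sum is the sum of its restrictions to the two summands, each of which
  is represented by non-singularity of the summand.\<close>
lemma hsum_nonsingular:
  assumes g: "A_linear n (k1 + k2) g"
  shows "\<exists>!y. y \<in> carrier_mat (k1 + k2) n \<and> (\<forall>x\<in>carrier_mat (k1 + k2) n. g x = hsum y x)"
proof -
  let ?t = "top_rows k1 n :: 'd mat \<Rightarrow> 'd mat" and ?b = "bottom_rows k1 k2 n :: 'd mat \<Rightarrow> 'd mat"
  define g1 where "g1 x = g (stack k1 k2 n x (0\<^sub>m k2 n))" for x
  define g2 where "g2 x = g (stack k1 k2 n (0\<^sub>m k1 n) x)" for x
  have lin1: "A_linear n k1 g1" and lin2: "A_linear n k2 g2"
    unfolding g1_def g2_def using A_linear_stack_top[OF g] A_linear_stack_bottom[OF g] by simp_all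
  obtain y1 where y1: "y1 \<in> carrier_mat k1 n" "\<forall>x\<in>carrier_mat k1 n. g1 x = h1 y1 x"
    using A.h_nonsingular[OF lin1] by blast
  obtain y2 where y2: "y2 \<in> carrier_mat k2 n" "\<forall>x\<in>carrier_mat k2 n. g2 x = h2 y2 x"
    using B.h_nonsingular[OF lin2] by blast
  have g_add: "x \<in> carrier_mat (k1 + k2) n \<Longrightarrow> y \<in> carrier_mat (k1 + k2) n \<Longrightarrow> g (x + y) = g x + g y"
    for x y using g unfolding A_linear_def by blast
  have split: "g x = g1 (?t x) + g2 (?b x)" if x: "x \<in> carrier_mat (k1 + k2) n" for x
  proof -
    have "x = stack k1 k2 n (?t x + 0\<^sub>m k1 n) (0\<^sub>m k2 n + ?b x)" using stack_top_bottom[OF x] by simp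
    also have "\<dots> = stack k1 k2 n (?t x) (0\<^sub>m k2 n) + stack k1 k2 n (0\<^sub>m k1 n) (?b x)"
      by (rule stack_add) auto
    finally show ?thesis unfolding g1_def g2_def using g_add by (metis stack_carrier)
  qed
  show ?thesis
  proof (rule ex1I)
    show "stack k1 k2 n y1 y2 \<in> carrier_mat (k1 + k2) n \<and>
        (\<forall>x\<in>carrier_mat (k1 + k2) n. g x = hsum (stack k1 k2 n y1 y2) x)"
      using split y1 y2 by (simp add: hsum_def top_rows_stack bottom_rows_stack)
  next
    fix y assume y: "y \<in> carrier_mat (k1 + k2) n \<and> (\<forall>x\<in>carrier_mat (k1 + k2) n. g x = hsum y x)"
    have "\<forall>x\<in>carrier_mat k1 n. g1 x = h1 (?t y) x"
      using y A.h_carrier B.h_zero_right by (simp add: g1_def hsum_stack)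
    then have "?t y = y1" using A.h_represents_unique[OF lin1] y y1 by simp
    moreover have "\<forall>x\<in>carrier_mat k2 n. g2 x = h2 (?b y) x"
      using y A.h_zero_right B.h_carrier by (simp add: g2_def hsum_stack)
    then have "?b y = y2" using B.h_represents_unique[OF lin2] y y2 by simp
    moreover have "y = stack k1 k2 n (?t y) (?b y)" by (rule stack_top_bottom[symmetric]) (use y in simp)
    ultimately show "y = stack k1 k2 n y1 y2" by simp
  qed
qed

lemma herm_form_hsum: "herm_form bar n (k1 + k2, hsum)"
proof (rule herm_formI)
  let ?C = "carrier_mat (k1 + k2) n :: 'd mat set"
  let ?t = "top_rows k1 n :: 'd mat \<Rightarrow> 'd mat" and ?b = "bottom_rows k1 k2 n :: 'd mat \<Rightarrow> 'd mat"
  show "hsum x y \<in> carrier_mat n n" for x y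
    unfolding hsum_def using A.h_carrier B.h_carrier by simp
  show "hsum (x + y) z = hsum x z + hsum y z" "hsum z (x + y) = hsum z x + hsum z y"
    if "x \<in> ?C" "y \<in> ?C" "z \<in> ?C" for x y z
    unfolding hsum_def using that A.h_carrier B.h_carrier
    by (simp_all add: top_rows_add bottom_rows_add A.h_add_left B.h_add_left A.h_add_right B.h_add_right
        add_mat_swap_middle[of _ n n])
  show "hsum (x * a) (y * b) = sigma bar a * hsum x y * b"
    if "x \<in> ?C" "y \<in> ?C" "a \<in> carrier_mat n n" "b \<in> carrier_mat n n" for x y a b
  proof -
    have "hsum (x * a) (y * b) =
        sigma bar a * h1 (?t x) (?t y) * b + sigma bar a * h2 (?b x) (?b y) * b"
      unfolding hsum_def using that
      by (simp add: top_rows_mult bottom_rows_mult A.h_sesquilinear B.h_sesquilinear)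
    also have "\<dots> = sigma bar a * hsum x y * b"
      unfolding hsum_def
      by (rule mult_add_mult_distrib_mat) (use that A.h_carrier B.h_carrier in simp_all)
    finally show ?thesis .
  qed
  show "hsum y x = sigma bar (hsum x y)" if "x \<in> ?C" "y \<in> ?C" for x y
    unfolding hsum_def using A.h_hermitian[of "?t x" "?t y"] B.h_hermitian[of "?b x" "?b y"]
      A.sigma_add[OF A.h_carrier[of "?t x" "?t y"] B.h_carrier[of "?b x" "?b y"]] by simp
  show "\<exists>!y. y \<in> ?C \<and> (\<forall>x\<in>?C. g x = hsum y x)" if "A_linear n (k1 + k2) g" for g
    by (rule hsum_nonsingular[OF that])
qed

end

section \<open>Parity of the rank\<close>

lemma rank_osum: "rank (osum n f g) = rank f + rank g"
  by (cases f, cases g) (simp add: osum_def rank_def)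

lemma rank_h_form: "rank (h_form bar n c) = 1"
  by (simp add: rank_def h_form_def)

lemma rank_form_of_exps: "is \<noteq> [] \<Longrightarrow> rank (form_of_exps bar n a is) = length is"
  by (induction bar n a "is" rule: form_of_exps.induct) (simp_all add: rank_osum rank_h_form)

lemma length_box_exps: "length (box_exps ps qs) = length ps * length qs"
  by (induction ps) (auto simp: box_exps_def)

lemma isometric_refl: "isometric n f f"
  by (cases f) (auto simp: isometric_def intro!: exI[of _ id])

lemma isometric_rank_osum:
  assumes "isometric n (osum n f1 m1) (osum n f2 m2)" "0 < n"
  shows "rank f1 + rank m1 = rank f2 + rank m2"
  using isometric_rank[OF assms] by (simp add: rank_osum)

context involution
begin

lemma metabolic_zero_form: "metabolic bar n (0, \<lambda>x y. 0\<^sub>m n n)"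
proof -
  let ?C = "carrier_mat 0 n :: 'd mat set"
  have single: "x = y" if "x \<in> ?C" "y \<in> ?C" for x y
    using that by (intro eq_matI) auto
  have "herm_form bar n (0, \<lambda>x y. 0\<^sub>m n n)"
  proof (rule herm_formI)
    fix g :: "'d mat \<Rightarrow> 'd mat" assume g: "A_linear n 0 g"
    have "g x = 0\<^sub>m n n" if x: "x \<in> ?C" for x
    proof (rule mat_add_self_eq_zero)
      show "g x \<in> carrier_mat n n" using g x by (simp add: A_linear_def)
      have "g x + g x = g (x + x)" using g x by (simp add: A_linear_def)
      also have "x + x = x" using single x by simp
      finally show "g x + g x = g x" .
    qed
    then show "\<exists>!y. y \<in> ?C \<and> (\<forall>x\<in>?C. g x = 0\<^sub>m n n)"
      using single by (intro ex1I[of _ "0\<^sub>m 0 n"]) auto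
  qed auto
  moreover have "submodule n 0 ?C" unfolding submodule_def by auto
  ultimately show ?thesis unfolding metabolic_def by auto
qed

lemma in_I_of_even_rank: "herm_form bar n f \<Longrightarrow> even (rank f) \<Longrightarrow> in_I bar n f"
  unfolding in_I_def witt_equiv_def using metabolic_zero_form isometric_refl by blast

lemma even_rank_if_metabolic:
  assumes "metabolic bar n f" "0 < n"
  shows "even (rank f)"
proof -
  obtain k h where f: "f = (k, h)" by (cases f)
  with assms(1) obtain L where "herm_form bar n (k, h)" "submodule n k L"
    "L = {y \<in> carrier_mat k n. \<forall>x\<in>L. h x y = 0\<^sub>m n n}"
    unfolding metabolic_def by auto
  then interpret lagrangian bar n k h L using assms(2) by unfold_locales
  show ?thesis using even_rank by (simp add: f rank_def)
qed

lemma even_rank_if_in_I: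
  assumes "in_I bar n f" "0 < n"
  shows "even (rank f)"
proof -
  obtain g m1 m2 where g: "even (rank g)" "metabolic bar n m1" "metabolic bar n m2"
    "isometric n (osum n f m1) (osum n g m2)"
    using assms(1) unfolding in_I_def witt_equiv_def by blast
  then have "rank f + rank m1 = rank g + rank m2" using isometric_rank_osum assms(2) by blast
  moreover have "even (rank m1)" "even (rank m2)" using even_rank_if_metabolic g(2,3) assms(2) by auto
  ultimately show ?thesis using g(1) by presburger
qed

lemma herm_form_osum:
  assumes "herm_form bar n f" "herm_form bar n g" "0 < n"
  shows "herm_form bar n (osum n f g)"
proof -
  obtain k1 h1 k2 h2 where fg: "f = (k1, h1)" "g = (k2, h2)" by (cases f, cases g)
  interpret hermitian_pair bar n k1 h1 k2 h2
    using assms fg by unfold_locales auto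
  show ?thesis using herm_form_hsum by (simp add: fg osum_eq)
qed

lemma herm_form_form_of_exps:
  assumes "bar a = a" "a \<noteq> 0" "0 < n" "is \<noteq> []"
  shows "herm_form bar n (form_of_exps bar n a is)"
  using assms(4)
proof (induction "is" rule: induct_list012)
  case (2 i)
  show ?case using herm_form_h_form[OF bar_power[OF assms(1)] _ assms(3)] assms(2) by simp
next
  case (3 i j "is")
  have "herm_form bar n (h_form bar n (a ^ i))"
    using herm_form_h_form[OF bar_power[OF assms(1)] _ assms(3)] assms(2) by simp
  then show ?case using herm_form_osum 3(2) assms(3) by simp
qed simp

lemma in_I_form_of_exps_if_even_length:
  assumes "bar a = a" "a \<noteq> 0" "0 < n" "is \<noteq> []" "even (length is)"
  shows "in_I bar n (form_of_exps bar n a is)"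
  using assms by (simp add: in_I_of_even_rank herm_form_form_of_exps rank_form_of_exps)

end

theorem mainTheorem14:
  fixes Fs :: "'d::division_ring set" and bar :: "'d \<Rightarrow> 'd"
    and n :: nat and a :: 'd and ps qs :: "nat list"
  assumes "central_subfield Fs" and "formally_real Fs"
    and "fin_dim_over Fs" and "centre_deg_le2 Fs"
    and "F_involution Fs bar"
    and "n \<ge> 1"
    and "bar a = a" and "a \<noteq> 0"
    and "ps \<noteq> []" and "qs \<noteq> []"
    and "in_I bar n (form_of_exps bar n a (box_exps ps qs))"
  shows "in_I bar n (form_of_exps bar n a ps) \<or> in_I bar n (form_of_exps bar n a qs)"
proof -
  interpret involution bar using involution_if_F_involution[OF assms(5)] .
  have n: "0 < n" using assms(6) by simp
  have "box_exps ps qs \<noteq> []" using assms(9,10) length_box_exps[of ps qs] by auto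
  then have "even (length ps * length qs)"
    using even_rank_if_in_I[OF assms(11) n] by (simp add: rank_form_of_exps length_box_exps)
  then have "even (length ps) \<or> even (length qs)" by simp
  then show ?thesis using in_I_form_of_exps_if_even_length assms(7-10) n by blast
qed

end
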